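(* The linear map $\Theta^d:\mathbf H^d_{ho}\to\mathbf{FQSym}^d$ defined on $d$-decorated heap-ordered forests by $\Theta^d((\mathbb F,\ell))=\sum_{\sigma\in S_{\mathbb F}}(\sigma,\ell)$ is an isomorphism of graded Hopf algebras.
   Context: Fix $d\ge1$. A rooted forest is a finite graph each of whose components is a tree with a distinguished root; edges are oriented towards the roots and $v\twoheadrightarrow w$ means there is an oriented path from $v$ to $w\ne v$. An ordered forest with $n$ vertices is a rooted forest with a total order of its vertices, identifying them with $\{1,\dots,n\}$; it is heap-ordered if $i\twoheadrightarrow j\Rightarrow i>j$. A $d$-decorated heap-ordered forest is a pair $(\mathbb F,\ell)$ with $\mathbb F$ heap-ordered with $n$ vertices and $\ell:\{1,\dots,n\}\to\{1,\dots,d\}$. $\mathbf H^d_{ho}$ has basis the $d$-decorated heap-ordered forests; product $(\mathbb F,\ell)(\mathbb G,\ell')=(\mathbb F\mathbb G,\ell\otimes\ell')$ where $\mathbb F\mathbb G$ is the disjoint union with the vertices of $\mathbb G$ shifted by $k=|\mathbb F|$ and $(\ell\otimes\ell')(i)=\ell(i)$ for $i\le k$, $\ell'(i-k)$ for $i>k$; coproduct $\Delta(\mathbb F,\ell)=\sum_{\vec v}\mathrm{Roo}_{\vec v}(\mathbb F,\ell)\otimes\mathrm{Lea}_{\vec v}(\mathbb F,\ell)$ over admissible cuts $\vec v$ (possibly empty sets of pairwise $\twoheadrightarrow$-incomparable vertices), $\mathrm{Lea}_{\vec v}$ being the subforest on $\vec v$ and all $w$ with $w\twoheadrightarrow v$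 for some $v\in\vec v$, $\mathrm{Roo}_{\vec v}$ the subforest on the other vertices, orders and decorations restricted (each vertex keeps its decoration). $\Sigma_n$: symmetric group; $(\sigma\otimes\tau)(i)=\sigma(i)$ ($i\le k$), $k+\tau(i-k)$ ($i>k$); $Sh(k,l)=\{\zeta\in\Sigma_{k+l}:\zeta^{-1}(1)<\dots<\zeta^{-1}(k),\ \zeta^{-1}(k+1)<\dots<\zeta^{-1}(k+l)\}$. A $d$-decorated permutation is a pair $(\sigma,\ell)$ with $\sigma\in\Sigma_n$, $\ell:\{1,\dots,n\}\to\{1,\dots,d\}$, represented by the two-row array with top row $\sigma(1)\ldots\sigma(n)$ and bottom row $\ell(\sigma(1))\ldots\ell(\sigma(n))$. $\mathbf{FQSym}^d$ has basis the $d$-decorated permutations, product $(\sigma,\ell)\cdot(\tau,\ell')=\sum_{\epsilon\in Sh(k,l)}((\sigma\otimes\tau)\circ\epsilon,\ell\otimes\ell')$, and coproduct $\Delta$ sending a two-row array of length $n$ to $\sum_{k=0}^n$ (first $k$ columns)$\otimes$(last $n-k$ columns), where in each piece the top row is standardized (its entries replaced by $1,2,\dots$ preserving relative order) and the bottom row is kept. $S_{\mathbb F}=\{\sigma\in\Sigma_n:i\twoheadrightarrow j\Rightarrow\sigma^{-1}(i)>\sigma^{-1}(j)\}$. *)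

theory Defs
  imports Main
begin

definition supp :: "('b \<Rightarrow> 'k::zero) \<Rightarrow> 'b set" where
  "supp x = {b. x b \<noteq> 0}"

definition fvec :: "'b set \<Rightarrow> ('b \<Rightarrow> 'k::zero) set" where
  "fvec B = {x. finite (supp x) \<and> supp x \<subseteq> B}"

definition bvec :: "'b \<Rightarrow> 'b \<Rightarrow> 'k::{zero,one}" where
  "bvec b = (\<lambda>c. if c = b then 1 else 0)"

definition lin_ext :: "('a \<Rightarrow> 'b \<Rightarrow> 'k::semiring_0) \<Rightarrow> ('a \<Rightarrow> 'k) \<Rightarrow> 'b \<Rightarrow> 'k" where
  "lin_ext f x = (\<lambda>c. \<Sum>a\<in>supp x. x a * f a c)"

definition bilin_ext :: "('a \<Rightarrow> 'b \<Rightarrow> 'c \<Rightarrow> 'k::semiring_0) \<Rightarrow> ('a \<Rightarrow> 'k) \<Rightarrow> ('b \<Rightarrow> 'k) \<Rightarrow> 'c \<Rightarrow> 'k" where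
  "bilin_ext m x y = (\<lambda>c. \<Sum>a\<in>supp x. \<Sum>b\<in>supp y. x a * y b * m a b c)"

text \<open>Tensor product V \<otimes> W of free vector spaces: basis = pairs of basis elements.
  tensor_map f g is f \<otimes> g.\<close>
definition tensor_map ::
  "(('a \<Rightarrow> 'k::semiring_1) \<Rightarrow> 'c \<Rightarrow> 'k) \<Rightarrow> (('b \<Rightarrow> 'k) \<Rightarrow> 'e \<Rightarrow> 'k) \<Rightarrow> ('a \<times> 'b \<Rightarrow> 'k) \<Rightarrow> ('c \<times> 'e) \<Rightarrow> 'k" where
  "tensor_map f g = lin_ext (\<lambda>(a,b) (c,e). f (bvec a) c * g (bvec b) e)"

text \<open>An ordered forest on vertices 0..n-1 is given by its parent list:
  ps!i = Some j means the edge i \<rightarrow> j (towards the root), ps!i = None means i is a root.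
  Decorations are given by the list of labels of the vertices.\<close>

type_synonym dforest = "nat option list \<times> nat list"

definition f_edges :: "nat option list \<Rightarrow> (nat \<times> nat) set" where
  "f_edges ps = {(i,j). i < length ps \<and> ps ! i = Some j}"

definition f_reach :: "nat option list \<Rightarrow> nat \<Rightarrow> nat \<Rightarrow> bool" where
  "f_reach ps i j = ((i,j) \<in> (f_edges ps)\<^sup>+)"

definition ordered_forest :: "nat option list \<Rightarrow> bool" where
  "ordered_forest ps = ((\<forall>i<length ps. \<forall>j. ps ! i = Some j \<longrightarrow> j < length ps)
                         \<and> (\<forall>i. \<not> f_reach ps i i))"

definition heap_ordered :: "nat option list \<Rightarrow> bool" where
  "heap_ordered ps = (ordered_forest ps \<and> (\<forall>i j. f_reach ps i j \<longrightarrow> i > j))"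

definition HF :: "nat \<Rightarrow> dforest set" where
  "HF d = {(ps, l). heap_ordered ps \<and> length l = length ps \<and> (\<forall>x\<in>set l. 1 \<le> x \<and> x \<le> d)}"

definition hdeg :: "dforest \<Rightarrow> nat" where
  "hdeg F = length (fst F)"

definition hf_mult :: "dforest \<Rightarrow> dforest \<Rightarrow> dforest" where
  "hf_mult F G = (fst F @ map (map_option (\<lambda>j. j + length (fst F))) (fst G), snd F @ snd G)"

definition admissible_cuts :: "nat option list \<Rightarrow> nat set set" where
  "admissible_cuts ps = {V. V \<subseteq> {0..<length ps} \<and> (\<forall>v\<in>V. \<forall>w\<in>V. \<not> f_reach ps v w)}"

definition lea_set :: "nat option list \<Rightarrow> nat set \<Rightarrow> nat set" where
  "lea_set ps V = V \<union> {w. w < length ps \<and> (\<exists>v\<in>V. f_reach ps w v)}"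

text \<open>Induced subforest on a vertex set S, order and decorations restricted
  (vertices renumbered increasingly).\<close>
definition sub_forest :: "dforest \<Rightarrow> nat set \<Rightarrow> dforest" where
  "sub_forest F S = (let ps = fst F; l = snd F; xs = sorted_list_of_set S in
     (map (\<lambda>i. case ps ! i of None \<Rightarrow> None
                  | Some j \<Rightarrow> (if j \<in> S then Some (card {s\<in>S. s < j}) else None)) xs,
      map (\<lambda>i. l ! i) xs))"

definition roo :: "dforest \<Rightarrow> nat set \<Rightarrow> dforest" where
  "roo F V = sub_forest F ({0..<length (fst F)} - lea_set (fst F) V)"

definition lea :: "dforest \<Rightarrow> nat set \<Rightarrow> dforest" where
  "lea F V = sub_forest F (lea_set (fst F) V)"

definition H_unit :: "dforest \<Rightarrow> 'k::{zero,one}" where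
  "H_unit = bvec ([], [])"

definition H_mult :: "(dforest \<Rightarrow> 'k::semiring_1) \<Rightarrow> (dforest \<Rightarrow> 'k) \<Rightarrow> dforest \<Rightarrow> 'k" where
  "H_mult = bilin_ext (\<lambda>F G. bvec (hf_mult F G))"

definition H_coprod_basis :: "dforest \<Rightarrow> dforest \<times> dforest \<Rightarrow> 'k::semiring_1" where
  "H_coprod_basis F = (\<lambda>c. \<Sum>V\<in>admissible_cuts (fst F). if (roo F V, lea F V) = c then 1 else 0)"

definition H_coprod :: "(dforest \<Rightarrow> 'k::semiring_1) \<Rightarrow> dforest \<times> dforest \<Rightarrow> 'k" where
  "H_coprod = lin_ext H_coprod_basis"

definition H_counit :: "(dforest \<Rightarrow> 'k::semiring_1) \<Rightarrow> 'k" where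
  "H_counit x = x ([], [])"

text \<open>A decorated permutation (\<sigma>, l) of {0..n-1}: w is the word \<sigma>(0) ... \<sigma>(n-1),
  l ! j is the decoration of j.\<close>

type_synonym dperm = "nat list \<times> nat list"

definition DP :: "nat \<Rightarrow> dperm set" where
  "DP d = {(w, l). distinct w \<and> set w = {0..<length w} \<and> length l = length w
                 \<and> (\<forall>x\<in>set l. 1 \<le> x \<and> x \<le> d)}"

definition pdeg :: "dperm \<Rightarrow> nat" where
  "pdeg p = length (fst p)"

text \<open>Sh(k,l) as words e = \<epsilon>(0)...\<epsilon>(k+l-1); e!i = a means \<epsilon>^{-1}(a) = i.\<close>
definition Sh :: "nat \<Rightarrow> nat \<Rightarrow> nat list set" where
  "Sh k l = {e. distinct e \<and> set e = {0..<k+l} \<and>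
     (\<forall>i<length e. \<forall>j<length e.
        ((e ! i < e ! j \<and> e ! j < k) \<or> (k \<le> e ! i \<and> e ! i < e ! j \<and> e ! j < k + l)) \<longrightarrow> i < j)}"

definition fq_mult_basis :: "dperm \<Rightarrow> dperm \<Rightarrow> dperm \<Rightarrow> 'k::semiring_1" where
  "fq_mult_basis p q = (\<lambda>c. \<Sum>e\<in>Sh (length (fst p)) (length (fst q)).
      if (map (\<lambda>i. (fst p @ map (\<lambda>x. x + length (fst p)) (fst q)) ! i) e, snd p @ snd q) = c
      then 1 else 0)"

definition F_mult :: "(dperm \<Rightarrow> 'k::semiring_1) \<Rightarrow> (dperm \<Rightarrow> 'k) \<Rightarrow> dperm \<Rightarrow> 'k" where
  "F_mult = bilin_ext fq_mult_basis"

definition F_unit :: "dperm \<Rightarrow> 'k::{zero,one}" where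
  "F_unit = bvec ([], [])"

definition std :: "nat list \<Rightarrow> nat list" where
  "std u = map (\<lambda>x. card {y\<in>set u. y < x}) u"

text \<open>The decorated permutation given by a set of columns u (top row entries) of the
  two-row array of (w, l): top row standardized, bottom row kept.\<close>
definition piece :: "nat list \<Rightarrow> nat list \<Rightarrow> dperm" where
  "piece u l = (std u, map (\<lambda>v. l ! v) (sorted_list_of_set (set u)))"

definition fq_coprod_basis :: "dperm \<Rightarrow> dperm \<times> dperm \<Rightarrow> 'k::semiring_1" where
  "fq_coprod_basis p = (\<lambda>c. \<Sum>k\<in>{0..length (fst p)}.
      if (piece (take k (fst p)) (snd p), piece (drop k (fst p)) (snd p)) = c then 1 else 0)"

definition F_coprod :: "(dperm \<Rightarrow> 'k::semiring_1) \<Rightarrow> dperm \<times> dperm \<Rightarrow> 'k" where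
  "F_coprod = lin_ext fq_coprod_basis"

definition F_counit :: "(dperm \<Rightarrow> 'k::semiring_1) \<Rightarrow> 'k" where
  "F_counit x = x ([], [])"

definition S_F :: "nat option list \<Rightarrow> nat list set" where
  "S_F ps = {w. distinct w \<and> set w = {0..<length ps} \<and>
     (\<forall>p<length w. \<forall>q<length w. f_reach ps (w ! p) (w ! q) \<longrightarrow> p > q)}"

definition theta_basis :: "dforest \<Rightarrow> dperm \<Rightarrow> 'k::semiring_1" where
  "theta_basis F = (\<lambda>c. \<Sum>w\<in>S_F (fst F). if (w, snd F) = c then 1 else 0)"

definition Theta :: "(dforest \<Rightarrow> 'k::semiring_1) \<Rightarrow> dperm \<Rightarrow> 'k" where
  "Theta = lin_ext theta_basis"

end

theory Submission
  imports Defs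
begin

(* Bijectivity rests on the map
   forest_of_word, which attaches to a word w the forest where the parent of a letter is the
   nearest smaller letter to its left: w is the lexicographically largest linear extension of
   its forest, and a counting argument (n! words, n! forests) makes forest_of_word a bijection,
   so Theta is unitriangular with respect to the lexicographic order. Multiplicativity is a bijection between triples
   (linear extension of F, linear extension of G, shuffle) and linear extensions of the
   product F G. Comultiplicativity is a bijection between pairs (linear extension of F, split
   point) and triples (admissible cut V, linear extension of the root part, linear extension
   of the leaf part); subforests are handled by renumbering along the increasing enumeration
   of a path-convex vertex set. *)

section \<open>Linear algebra on free vector spaces\<close>

lemma lin_ext_superset:
  assumes "finite A" "supp x \<subseteq> A"
  shows "lin_ext f x c = (\<Sum>a\<in>A. x a * f a c)"
proof -
  have "(\<Sum>a\<in>A. x a * f a c) = (\<Sum>a\<in>supp x. x a * f a c)"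
    by (rule sum.mono_neutral_right[OF assms(1) assms(2)]) (auto simp: supp_def)
  thus ?thesis by (simp add: lin_ext_def)
qed

lemma supp_indicator_sum:
  "supp (\<lambda>c. \<Sum>i\<in>I. if h i = c then (1::'k::semiring_1) else 0) \<subseteq> h ` I"
proof
  fix b assume b: "b \<in> supp (\<lambda>c. \<Sum>i\<in>I. if h i = c then (1::'k) else 0)"
  show "b \<in> h ` I"
  proof (rule ccontr)
    assume "b \<notin> h ` I"
    hence "(\<Sum>i\<in>I. if h i = b then (1::'k) else 0) = 0" by (intro sum.neutral) auto
    with b show False by (simp add: supp_def)
  qed
qed

lemma lin_ext_ind:
  fixes g :: "'b \<Rightarrow> 'c \<Rightarrow> 'k::semiring_1"
  assumes "finite I"
  shows "lin_ext g (\<lambda>c. \<Sum>i\<in>I. if h i = c then 1 else 0) c' = (\<Sum>i\<in>I. g (h i) c')"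
proof -
  let ?y = "\<lambda>c. \<Sum>i\<in>I. if h i = c then (1::'k) else 0"
  have "lin_ext g ?y c' = (\<Sum>b\<in>h ` I. ?y b * g b c')"
    by (rule lin_ext_superset[OF _ supp_indicator_sum]) (use assms in auto)
  also have "\<dots> = (\<Sum>b\<in>h ` I. \<Sum>i\<in>I. if h i = b then g b c' else 0)"
    by (intro sum.cong refl) (simp add: sum_distrib_right, rule sum.cong, auto)
  also have "\<dots> = (\<Sum>i\<in>I. \<Sum>b\<in>h ` I. if h i = b then g b c' else 0)"
    by (rule sum.swap)
  also have "\<dots> = (\<Sum>i\<in>I. g (h i) c')"
    using assms by (intro sum.cong refl) (simp add: sum.delta')
  finally show ?thesis .
qed

lemma supp_lin_ext: "supp (lin_ext f x) \<subseteq> (\<Union>a\<in>supp x. supp (f a))"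
proof
  fix c assume "c \<in> supp (lin_ext f x)"
  hence "(\<Sum>a\<in>supp x. x a * f a c) \<noteq> 0" by (simp add: supp_def lin_ext_def)
  then obtain a where "a \<in> supp x" "x a * f a c \<noteq> 0"
    by (rule sum.not_neutral_contains_not_neutral)
  thus "c \<in> (\<Union>a\<in>supp x. supp (f a))" by (auto simp: supp_def)
qed

lemma finite_supp_lin_ext:
  assumes "finite (supp x)" "\<And>a. a \<in> supp x \<Longrightarrow> finite (supp (f a))"
  shows "finite (supp (lin_ext f x))"
  by (rule finite_subset[OF supp_lin_ext]) (use assms in auto)

lemma lin_ext_comp:
  fixes x :: "'a \<Rightarrow> 'k::comm_semiring_0"
  assumes "finite (supp x)" "\<And>a. a \<in> supp x \<Longrightarrow> finite (supp (f a))"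
  shows "lin_ext g (lin_ext f x) c = (\<Sum>a\<in>supp x. x a * lin_ext g (f a) c)"
proof -
  let ?U = "\<Union>a\<in>supp x. supp (f a)"
  have fU: "finite ?U" using assms by auto
  have "lin_ext g (lin_ext f x) c = (\<Sum>b\<in>?U. lin_ext f x b * g b c)"
    by (rule lin_ext_superset[OF fU supp_lin_ext])
  also have "\<dots> = (\<Sum>b\<in>?U. \<Sum>a\<in>supp x. x a * f a b * g b c)"
    by (simp add: lin_ext_def sum_distrib_right)
  also have "\<dots> = (\<Sum>a\<in>supp x. \<Sum>b\<in>?U. x a * f a b * g b c)" by (rule sum.swap)
  also have "\<dots> = (\<Sum>a\<in>supp x. x a * lin_ext g (f a) c)"
  proof (rule sum.cong[OF refl])
    fix a assume a: "a \<in> supp x"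
    have "lin_ext g (f a) c = (\<Sum>b\<in>?U. f a b * g b c)"
      by (rule lin_ext_superset[OF fU]) (use a in auto)
    thus "(\<Sum>b\<in>?U. x a * f a b * g b c) = x a * lin_ext g (f a) c"
      by (simp add: sum_distrib_left mult.assoc)
  qed
  finally show ?thesis .
qed

lemma supp_lincomb:
  fixes c :: "'i \<Rightarrow> 'k::semiring_0"
  shows "supp (\<lambda>a. \<Sum>i\<in>I. c i * y i a) \<subseteq> (\<Union>i\<in>I. supp (y i))"
proof
  fix a assume "a \<in> supp (\<lambda>a. \<Sum>i\<in>I. c i * y i a)"
  hence "(\<Sum>i\<in>I. c i * y i a) \<noteq> 0" by (simp add: supp_def)
  then obtain i where "i \<in> I" "c i * y i a \<noteq> 0"
    using sum.not_neutral_contains_not_neutral by blast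
  moreover from this(2) have "y i a \<noteq> 0" by auto
  ultimately show "a \<in> (\<Union>i\<in>I. supp (y i))" by (auto simp: supp_def)
qed

lemma lin_ext_lincomb:
  fixes c :: "'i \<Rightarrow> 'k::comm_semiring_0"
  assumes "finite I" "\<And>i. i \<in> I \<Longrightarrow> finite (supp (y i))"
  shows "lin_ext f (\<lambda>a. \<Sum>i\<in>I. c i * y i a) b = (\<Sum>i\<in>I. c i * lin_ext f (y i) b)"
proof -
  let ?A = "\<Union>i\<in>I. supp (y i)"
  have fA: "finite ?A" using assms by auto
  have "lin_ext f (\<lambda>a. \<Sum>i\<in>I. c i * y i a) b = (\<Sum>a\<in>?A. (\<Sum>i\<in>I. c i * y i a) * f a b)"
    by (rule lin_ext_superset[OF fA supp_lincomb])
  also have "\<dots> = (\<Sum>i\<in>I. \<Sum>a\<in>?A. c i * y i a * f a b)"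
    by (simp add: sum_distrib_right) (rule sum.swap)
  also have "\<dots> = (\<Sum>i\<in>I. c i * lin_ext f (y i) b)"
  proof (rule sum.cong[OF refl])
    fix i assume i: "i \<in> I"
    have "lin_ext f (y i) b = (\<Sum>a\<in>?A. y i a * f a b)"
      by (rule lin_ext_superset[OF fA]) (use i in auto)
    thus "(\<Sum>a\<in>?A. c i * y i a * f a b) = c i * lin_ext f (y i) b"
      by (simp add: sum_distrib_left mult.assoc)
  qed
  finally show ?thesis .
qed

lemma fvec_lincomb:
  fixes c :: "'i \<Rightarrow> 'k::semiring_0"
  assumes "finite I" "\<And>i. i \<in> I \<Longrightarrow> y i \<in> fvec B"
  shows "(\<lambda>a. \<Sum>i\<in>I. c i * y i a) \<in> fvec B"
proof -
  have fin: "finite (\<Union>i\<in>I. supp (y i))" and sub: "(\<Union>i\<in>I. supp (y i)) \<subseteq> B"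
    using assms by (auto simp: fvec_def)
  show ?thesis unfolding fvec_def mem_Collect_eq
    using finite_subset[OF supp_lincomb fin] order_trans[OF supp_lincomb sub] by blast
qed

lemma fvec_lin:
  fixes c :: "'k::semiring_0"
  shows "x \<in> fvec B \<Longrightarrow> y \<in> fvec B \<Longrightarrow> (\<lambda>a. c * x a + y a) \<in> fvec B"
proof -
  assume x: "x \<in> fvec B" and y: "y \<in> fvec B"
  have "supp (\<lambda>a. c * x a + y a) \<subseteq> supp x \<union> supp y" by (auto simp: supp_def)
  thus ?thesis using x y unfolding fvec_def by (auto intro: finite_subset)
qed

lemma supp_bvec: "supp (bvec b :: 'b \<Rightarrow> 'k::zero_neq_one) = {b}"
  by (auto simp: supp_def bvec_def)

lemma bvec_fvec: "b \<in> B \<Longrightarrow> (bvec b :: 'b \<Rightarrow> 'k::zero_neq_one) \<in> fvec B"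
  by (simp add: fvec_def supp_bvec)

lemma lin_ext_bvec: "lin_ext f (bvec b :: 'b \<Rightarrow> 'k::semiring_1) = f b"
  by (rule ext) (simp add: lin_ext_def supp_bvec, simp add: bvec_def)

lemma bilin_as_lin:
  fixes X :: "'a \<Rightarrow> 'k::comm_semiring_0"
  shows "bilin_ext m X Y c = lin_ext (\<lambda>p. lin_ext (m p) Y) X c"
  unfolding bilin_ext_def lin_ext_def by (simp add: sum_distrib_left mult.assoc)

section \<open>Heap-ordered forests and the map Theta\<close>

definition heap_forest :: "nat option list \<Rightarrow> bool" where
  "heap_forest ps = (\<forall>i<length ps. \<forall>j. ps ! i = Some j \<longrightarrow> j < i)"

lemma f_reach_src: "f_reach ps i j \<Longrightarrow> i < length ps"
  unfolding f_reach_def by (induct rule: trancl_induct) (auto simp: f_edges_def)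

lemma f_reach_dec: assumes "heap_forest ps" "f_reach ps i j" shows "j < i"
  using assms(2) unfolding f_reach_def
  by (induct rule: trancl_induct) (use assms(1) in \<open>auto simp: f_edges_def heap_forest_def\<close>)

lemma f_reach_trans: "f_reach ps x y \<Longrightarrow> f_reach ps y z \<Longrightarrow> f_reach ps x z"
  unfolding f_reach_def by (rule trancl_trans)

lemma edge_reach: "i < length ps \<Longrightarrow> ps ! i = Some j \<Longrightarrow> f_reach ps i j"
  unfolding f_reach_def f_edges_def by auto

lemma heap_ordered_iff: "heap_ordered ps \<longleftrightarrow> heap_forest ps"
proof
  assume h: "heap_ordered ps"
  show "heap_forest ps" unfolding heap_forest_def
  proof (intro allI impI)
    fix i j assume "i < length ps" "ps ! i = Some j"
    hence "f_reach ps i j" by (rule edge_reach)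
    thus "j < i" using h by (auto simp: heap_ordered_def)
  qed
next
  assume h: "heap_forest ps"
  show "heap_ordered ps" unfolding heap_ordered_def ordered_forest_def
    using f_reach_dec[OF h] h by (fastforce simp: heap_forest_def)
qed

lemma HF_heap_forest: "F \<in> HF d \<Longrightarrow> heap_forest (fst F)"
  by (auto simp: HF_def heap_ordered_iff)

lemma S_F_sub: "S_F ps \<subseteq> {w. set w \<subseteq> {0..<length ps} \<and> length w = length ps}"
  unfolding S_F_def using distinct_card by fastforce

lemma finite_S_F: "finite (S_F ps)"
  by (rule finite_subset[OF S_F_sub]) (rule finite_lists_length_eq, simp)

lemma S_F_length: "w \<in> S_F ps \<Longrightarrow> length w = length ps"
  using S_F_sub by blast

lemma theta_basis_val:
  "theta_basis F p = (if fst p \<in> S_F (fst F) \<and> snd p = snd F then 1 else 0)"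
proof -
  have "theta_basis F p = (\<Sum>w\<in>S_F (fst F). if w = fst p then (if snd p = snd F then 1 else 0) else 0)"
    unfolding theta_basis_def by (intro sum.cong refl) (cases p, auto)
  also have "\<dots> = (if fst p \<in> S_F (fst F) \<and> snd p = snd F then 1 else 0)"
    by (simp add: sum.delta' finite_S_F)
  finally show ?thesis .
qed

lemma lin_ext_theta:
  "lin_ext g (theta_basis F) c = (\<Sum>u\<in>S_F (fst F). g (u, snd F) c)"
  unfolding theta_basis_def by (rule lin_ext_ind[OF finite_S_F])

lemma supp_theta_basis:
  "supp (theta_basis F :: dperm \<Rightarrow> 'k::semiring_1) = (\<lambda>w. (w, snd F)) ` S_F (fst F)"
  by (auto simp: supp_def theta_basis_val split: if_splits)

lemma finite_supp_theta: "finite (supp (theta_basis F :: dperm \<Rightarrow> 'k::semiring_1))"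
  by (simp add: supp_theta_basis finite_S_F)

lemma supp_Theta: "supp (Theta x) \<subseteq> (\<Union>F\<in>supp x. (\<lambda>w. (w, snd F)) ` S_F (fst F))"
  using supp_lin_ext[of theta_basis x] by (simp add: Theta_def supp_theta_basis)

lemma finite_supp_Theta: "finite (supp x) \<Longrightarrow> finite (supp (Theta (x :: dforest \<Rightarrow> 'k::semiring_1)))"
  unfolding Theta_def by (rule finite_supp_lin_ext) (auto intro: finite_supp_theta)

lemma Theta_as_lin: "Theta x = lin_ext theta_basis x"
  unfolding Theta_def ..

lemma Theta_eval: "Theta x p = (\<Sum>F\<in>supp x. x F * theta_basis F p)"
  unfolding Theta_def lin_ext_def ..

lemma Theta_bvec: "Theta (bvec F :: dforest \<Rightarrow> 'k::semiring_1) = theta_basis F"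
  unfolding Theta_def by (rule lin_ext_bvec)

lemma Theta_lincomb:
  fixes c :: "'i \<Rightarrow> 'k::comm_semiring_1"
  assumes "finite I" "\<And>i. i \<in> I \<Longrightarrow> finite (supp (y i))"
  shows "Theta (\<lambda>a. \<Sum>i\<in>I. c i * y i a) = (\<lambda>p. \<Sum>i\<in>I. c i * Theta (y i) p)"
  unfolding Theta_def by (rule ext, rule lin_ext_lincomb[OF assms])

lemma Theta_linear:
  assumes "finite (supp x)" "finite (supp y)"
  shows "Theta (\<lambda>F. c * x F + y F) = (\<lambda>p. c * Theta x p + Theta (y :: dforest \<Rightarrow> 'k::comm_semiring_1) p)"
proof (rule ext)
  fix p
  let ?A = "supp x \<union> supp y"
  have fA: "finite ?A" using assms by auto
  have sub: "supp (\<lambda>F. c * x F + y F) \<subseteq> ?A" by (auto simp: supp_def)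
  have "Theta (\<lambda>F. c * x F + y F) p = (\<Sum>F\<in>?A. (c * x F + y F) * theta_basis F p)"
    unfolding Theta_def by (rule lin_ext_superset[OF fA sub])
  also have "\<dots> = c * (\<Sum>F\<in>?A. x F * theta_basis F p) + (\<Sum>F\<in>?A. y F * theta_basis F p)"
    by (simp add: sum.distrib sum_distrib_left algebra_simps)
  also have "\<dots> = c * Theta x p + Theta y p"
    unfolding Theta_def by (subst (1 2) lin_ext_superset[OF fA]) auto
  finally show "Theta (\<lambda>F. c * x F + y F) p = c * Theta x p + Theta y p" .
qed

text \<open>Only the empty forest has the empty word as a linear extension: Theta preserves
  unit and counit.\<close>
lemma S_F_Nil: "S_F [] = {[]}" by (auto simp: S_F_def)

lemma Nil_in_S_F: "[] \<in> S_F ps \<longleftrightarrow> ps = []" by (auto simp: S_F_def)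

lemma Theta_unit: "Theta (H_unit :: dforest \<Rightarrow> 'k::semiring_1) = F_unit"
  unfolding H_unit_def F_unit_def Theta_bvec
  by (rule ext) (auto simp: theta_basis_val S_F_Nil bvec_def)

lemma Theta_counit:
  assumes "finite (supp x)"
  shows "F_counit (Theta x) = (H_counit x :: 'k::semiring_1)"
proof -
  have "Theta x ([],[]) = (\<Sum>F\<in>supp x. if F = ([],[]) then x F else 0)"
    unfolding Theta_eval by (intro sum.cong refl) (auto simp: theta_basis_val Nil_in_S_F)
  also have "\<dots> = x ([],[])" using assms by (simp add: sum.delta') (simp add: supp_def)
  finally show ?thesis by (simp add: F_counit_def H_counit_def)
qed

text \<open>Linear extensions have as many letters as the forest has vertices: Theta is graded,
  and it maps decorated heap-ordered forests to decorated permutations.\<close>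
lemma Theta_grading:
  assumes "supp x \<subseteq> {F. hdeg F = n}"
  shows "supp (Theta x) \<subseteq> {p. pdeg p = n}"
  using supp_Theta[of x] assms S_F_length by (force simp: pdeg_def hdeg_def)

lemma Theta_into:
  assumes "x \<in> fvec (HF d)"
  shows "Theta (x :: dforest \<Rightarrow> 'k::semiring_1) \<in> fvec (DP d)"
proof -
  have "supp (Theta x) \<subseteq> DP d"
  proof
    fix p assume "p \<in> supp (Theta x)"
    then obtain F w where F: "F \<in> supp x" "w \<in> S_F (fst F)" "p = (w, snd F)"
      using supp_Theta by blast
    have "F \<in> HF d" using F(1) assms by (auto simp: fvec_def)
    thus "p \<in> DP d" using F S_F_length[OF F(2)]
      by (cases F) (auto simp: DP_def HF_def S_F_def)
  qed
  thus ?thesis using assms finite_supp_Theta by (auto simp: fvec_def)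
qed

section \<open>Words, positions and the relation "before"\<close>

definition perm_words :: "nat \<Rightarrow> nat list set" where
  "perm_words n = {w. distinct w \<and> set w = {0..<n}}"

lemma perm_words_length: "w \<in> perm_words n \<Longrightarrow> length w = n"
proof -
  assume "w \<in> perm_words n"
  hence "distinct w" "set w = {0..<n}" by (auto simp: perm_words_def)
  hence "length w = card {0..<n}" using distinct_card by metis
  thus ?thesis by simp
qed

lemma card_perm_words: "card (perm_words n) = fact n"
proof -
  have "perm_words n = {xs. length xs = card {0..<n} \<and> distinct xs \<and> set xs \<subseteq> {0..<n}}"
  proof (rule set_eqI, rule iffI)
    fix xs assume "xs \<in> perm_words n"
    thus "xs \<in> {xs. length xs = card {0..<n} \<and> distinct xs \<and> set xs \<subseteq> {0..<n}}"
      using perm_words_length[of xs n] by (simp add: perm_words_def)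
  next
    fix xs assume a: "xs \<in> {xs. length xs = card {0..<n} \<and> distinct xs \<and> set xs \<subseteq> {0..<n}}"
    hence "card (set xs) = card {0..<n}" using distinct_card[of xs] by simp
    hence "set xs = {0..<n}" using a card_subset_eq[of "{0..<n}" "set xs"] by simp
    thus "xs \<in> perm_words n" using a by (simp add: perm_words_def)
  qed
  hence "card (perm_words n) = \<Prod>{card {0..<n} - card {0..<n} + 1 .. card {0..<n}}"
    using card_lists_distinct_length_eq[of "{0..<n}" "card {0..<n}"] by simp
  thus ?thesis by (simp add: fact_prod)
qed

lemma finite_perm_words: "finite (perm_words n)"
  using card_perm_words[of n] card.infinite by fastforce

definition pos :: "nat list \<Rightarrow> nat \<Rightarrow> nat" where
  "pos w i = (THE p. p < length w \<and> w ! p = i)"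

lemma pos_prop:
  assumes "distinct w" "i \<in> set w"
  shows "pos w i < length w \<and> w ! pos w i = i"
proof -
  obtain p where p: "p < length w" "w ! p = i" using assms(2) by (auto simp: in_set_conv_nth)
  have "\<exists>!p. p < length w \<and> w ! p = i"
  proof (rule ex1I[of _ p])
    show "p < length w \<and> w ! p = i" using p by simp
    fix q assume "q < length w \<and> w ! q = i"
    thus "q = p" using nth_eq_iff_index_eq[OF assms(1)] p by auto
  qed
  thus ?thesis unfolding pos_def by (rule theI')
qed

lemma pos_nth: "distinct w \<Longrightarrow> p < length w \<Longrightarrow> pos w (w ! p) = p"
proof -
  assume d: "distinct w" and p: "p < length w"
  have "pos w (w!p) < length w \<and> w ! pos w (w!p) = w ! p" using pos_prop[OF d] p by simp
  thus ?thesis using nth_eq_iff_index_eq[OF d] p by blast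
qed

text \<open>Linear extensions and shuffles
  are conveniently characterised by this relation, which behaves well under filtering, mapping
  and concatenation.\<close>

definition before :: "nat list \<Rightarrow> nat \<Rightarrow> nat \<Rightarrow> bool" where
  "before w a b = (\<exists>xs ys. w = xs @ b # ys \<and> a \<in> set xs)"

lemma before_pos:
  assumes "distinct w"
  shows "before w a b \<longleftrightarrow> a \<in> set w \<and> b \<in> set w \<and> pos w a < pos w b"
proof
  assume "before w a b"
  then obtain xs ys where w: "w = xs @ b # ys" and a: "a \<in> set xs" by (auto simp: before_def)
  have pb: "pos w b = length xs" using pos_nth[OF assms, of "length xs"] w by simp
  obtain i where i: "i < length xs" "xs ! i = a" using a by (auto simp: in_set_conv_nth)
  have pa: "pos w a = i" using pos_nth[OF assms, of i] w i by (simp add: nth_append)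
  show "a \<in> set w \<and> b \<in> set w \<and> pos w a < pos w b" using w a pa pb i by auto
next
  assume h: "a \<in> set w \<and> b \<in> set w \<and> pos w a < pos w b"
  define q where "q = pos w b"
  have q: "q < length w" "w ! q = b" using pos_prop[OF assms] h by (auto simp: q_def)
  have w: "w = take q w @ b # drop (Suc q) w" using q by (metis id_take_nth_drop)
  have pa: "pos w a < length w" "w ! pos w a = a" using pos_prop[OF assms] h by auto
  have lt: "pos w a < q" using h by (simp add: q_def)
  have "take q w ! pos w a = a" using lt pa by simp
  moreover have "pos w a < length (take q w)" using lt q by simp
  ultimately have "a \<in> set (take q w)" by (metis nth_mem)
  thus "before w a b" unfolding before_def using w by blast
qed

lemma before_nth: "distinct w \<Longrightarrow> p < q \<Longrightarrow> q < length w \<Longrightarrow> before w (w ! p) (w ! q)"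
  by (simp add: before_pos pos_nth)

lemma before_filter_I: "before w a b \<Longrightarrow> P a \<Longrightarrow> P b \<Longrightarrow> before (filter P w) a b"
proof -
  assume "before w a b" "P a" "P b"
  then obtain xs ys where "w = xs @ b # ys" "a \<in> set xs" by (auto simp: before_def)
  hence "filter P w = filter P xs @ b # filter P ys" "a \<in> set (filter P xs)" using \<open>P a\<close> \<open>P b\<close> by auto
  thus ?thesis unfolding before_def by blast
qed

lemma before_filter_D: "before (filter P w) a b \<Longrightarrow> before w a b"
proof (induct w)
  case Nil thus ?case by (simp add: before_def)
next
  case (Cons c w)
  show ?case
  proof (cases "P c")
    case False
    hence "before (filter P w) a b" using Cons(2) by simp
    hence "before w a b" by (rule Cons(1))
    then obtain xs ys where "w = xs @ b # ys" "a \<in> set xs" by (auto simp: before_def)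
    thus ?thesis unfolding before_def by (intro exI[of _ "c # xs"] exI[of _ ys]) auto
  next
    case True
    from Cons(2) True obtain xs ys where e: "c # filter P w = xs @ b # ys" and a: "a \<in> set xs"
      by (auto simp: before_def)
    then obtain xs' where xs: "xs = c # xs'" by (cases xs) auto
    have e': "filter P w = xs' @ b # ys" using e xs by simp
    show ?thesis
    proof (cases "a = c")
      case True
      have "b \<in> set (filter P w)" using e' by simp
      hence "b \<in> set w" by simp
      then obtain s t where "w = s @ b # t" by (meson split_list)
      thus ?thesis unfolding before_def using True by (intro exI[of _ "c # s"] exI[of _ t]) auto
    next
      case False
      hence "a \<in> set xs'" using a xs by simp
      hence "before (filter P w) a b" using e' by (auto simp: before_def)
      hence "before w a b" by (rule Cons(1))
      then obtain s t where "w = s @ b # t" "a \<in> set s" by (auto simp: before_def)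
      thus ?thesis unfolding before_def by (intro exI[of _ "c # s"] exI[of _ t]) auto
    qed
  qed
qed

lemma before_map_I: "before w a b \<Longrightarrow> before (map f w) (f a) (f b)"
proof -
  assume "before w a b"
  then obtain xs ys where "w = xs @ b # ys" "a \<in> set xs" by (auto simp: before_def)
  hence "map f w = map f xs @ f b # map f ys" "f a \<in> set (map f xs)" by auto
  thus ?thesis unfolding before_def by blast
qed

lemma before_map_D:
  assumes "before (map f w) (f a) (f b)" "inj_on f (set w)" "a \<in> set w" "b \<in> set w"
  shows "before w a b"
proof -
  obtain xs ys where e: "map f w = xs @ f b # ys" and a: "f a \<in> set xs"
    using assms(1) by (auto simp: before_def)
  then obtain w1 w2 where w: "w = w1 @ w2" "map f w1 = xs" "map f w2 = f b # ys"
    by (auto simp: map_eq_append_conv)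
  then obtain b' w2' where w2: "w2 = b' # w2'" "f b' = f b" by (cases w2) auto
  have "b' = b" using assms(2,4) w w2 by (auto simp: inj_on_def)
  obtain a' where a': "a' \<in> set w1" "f a' = f a" using a w(2) by auto
  have "a' = a" using assms(2,3) w a' by (auto simp: inj_on_def)
  thus ?thesis unfolding before_def using w w2 \<open>b' = b\<close> a' by blast
qed

lemma before_append_L: "before xs a b \<Longrightarrow> before (xs @ ys) a b"
  unfolding before_def by force

lemma before_append_R: "before ys a b \<Longrightarrow> before (xs @ ys) a b"
proof -
  assume "before ys a b"
  then obtain s t where "ys = s @ b # t" "a \<in> set s" by (auto simp: before_def)
  hence "xs @ ys = (xs @ s) @ b # t" "a \<in> set (xs @ s)" by auto
  thus ?thesis unfolding before_def by blast
qed

lemma before_cross: "a \<in> set xs \<Longrightarrow> b \<in> set ys \<Longrightarrow> before (xs @ ys) a b"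
proof -
  assume "a \<in> set xs" "b \<in> set ys"
  then obtain s t where "ys = s @ b # t" by (meson split_list)
  hence "xs @ ys = (xs @ s) @ b # t" "a \<in> set (xs @ s)" using \<open>a \<in> set xs\<close> by auto
  thus ?thesis unfolding before_def by blast
qed

lemma before_Cons_D: "before (x # xs) a b \<Longrightarrow> a \<noteq> x \<Longrightarrow> before xs a b"
proof -
  assume "before (x # xs) a b" "a \<noteq> x"
  then obtain s t where e: "x # xs = s @ b # t" and a: "a \<in> set s" by (auto simp: before_def)
  then obtain s' where s: "s = x # s'" by (cases s) auto
  hence "xs = s' @ b # t" "a \<in> set s'" using e a \<open>a \<noteq> x\<close> by auto
  thus ?thesis unfolding before_def by blast
qed

lemma before_Cons_head: "b \<in> set xs \<Longrightarrow> before (x # xs) x b"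
proof -
  assume "b \<in> set xs"
  then obtain s t where "xs = s @ b # t" by (meson split_list)
  hence "x # xs = (x # s) @ b # t" "x \<in> set (x # s)" by auto
  thus ?thesis unfolding before_def by blast
qed

lemma before_not_head: "before (x # xs) a x \<Longrightarrow> x \<in> set xs"
proof -
  assume "before (x # xs) a x"
  then obtain s t where e: "x # xs = s @ x # t" and a: "a \<in> set s" by (auto simp: before_def)
  then obtain y s' where s: "s = y # s'" by (cases s) auto
  hence "xs = s' @ x # t" using e by simp
  thus ?thesis by simp
qed

lemma eq_by_before:
  "distinct xs \<Longrightarrow> distinct ys \<Longrightarrow> set xs = set ys \<Longrightarrow> (\<forall>a b. before xs a b \<longrightarrow> before ys a b) \<Longrightarrow> xs = ys"
proof (induct xs arbitrary: ys)
  case Nil thus ?case by simp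
next
  case (Cons x xs)
  obtain y ys' where ys: "ys = y # ys'" using Cons(4) by (cases ys) auto
  have "y = x"
  proof (rule ccontr)
    assume "y \<noteq> x"
    hence "y \<in> set xs" using Cons(4) ys by auto
    hence "before (x # xs) x y" by (rule before_Cons_head)
    hence "before ys x y" using Cons(5) by blast
    hence "y \<in> set ys'" using ys before_not_head by blast
    thus False using Cons(3) ys by simp
  qed
  have "xs = ys'"
  proof (rule Cons(1))
    show "distinct xs" using Cons(2) by simp
    show "distinct ys'" using Cons(3) ys by simp
    show "set xs = set ys'" using Cons(2,3,4) ys \<open>y = x\<close> by auto
    show "\<forall>a b. before xs a b \<longrightarrow> before ys' a b"
    proof (intro allI impI)
      fix a b assume "before xs a b"
      have b1: "before (x # xs) a b"
      proof -
        obtain s t where "xs = s @ b # t" "a \<in> set s" using \<open>before xs a b\<close> by (auto simp: before_def)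
        hence "x # xs = (x # s) @ b # t" "a \<in> set (x # s)" by auto
        thus ?thesis unfolding before_def by blast
      qed
      hence "before ys a b" using Cons(5) by blast
      moreover have "a \<noteq> x" using \<open>before xs a b\<close> Cons(2) by (auto simp: before_def)
      ultimately show "before ys' a b" using ys \<open>y = x\<close> before_Cons_D by blast
    qed
  qed
  thus ?case using ys \<open>y = x\<close> by simp
qed

lemma filter_app_L: "distinct (xs @ ys) \<Longrightarrow> filter (\<lambda>x. x \<in> set xs) (xs @ ys) = xs"
proof -
  assume d: "distinct (xs @ ys)"
  have "filter (\<lambda>x. x \<in> set xs) xs = xs" by (rule filter_True) simp
  moreover have "filter (\<lambda>x. x \<in> set xs) ys = []" using d by (intro filter_False) auto
  ultimately show ?thesis by simp
qed

lemma filter_app_R: "distinct (xs @ ys) \<Longrightarrow> filter (\<lambda>x. x \<in> set ys) (xs @ ys) = ys"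
proof -
  assume d: "distinct (xs @ ys)"
  have "filter (\<lambda>x. x \<in> set ys) ys = ys" by (rule filter_True) simp
  moreover have "filter (\<lambda>x. x \<in> set ys) xs = []" using d by (intro filter_False) auto
  ultimately show ?thesis by simp
qed

lemma positions_iff_before:
  assumes d: "distinct w"
  shows "(\<forall>i<length w. \<forall>j<length w. P (w ! i) (w ! j) \<longrightarrow> i < j)
    \<longleftrightarrow> (\<forall>a\<in>set w. \<forall>b\<in>set w. P a b \<longrightarrow> before w a b)"
proof
  assume h: "\<forall>i<length w. \<forall>j<length w. P (w ! i) (w ! j) \<longrightarrow> i < j"
  show "\<forall>a\<in>set w. \<forall>b\<in>set w. P a b \<longrightarrow> before w a b"
  proof (intro ballI impI)
    fix a b assume a: "a \<in> set w" and b: "b \<in> set w" and "P a b"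
    hence "pos w a < pos w b" using h pos_prop[OF d a] pos_prop[OF d b] by metis
    thus "before w a b" using before_pos[OF d] a b by simp
  qed
next
  assume h: "\<forall>a\<in>set w. \<forall>b\<in>set w. P a b \<longrightarrow> before w a b"
  show "\<forall>i<length w. \<forall>j<length w. P (w ! i) (w ! j) \<longrightarrow> i < j"
  proof (intro allI impI)
    fix i j assume ij: "i < length w" "j < length w" "P (w ! i) (w ! j)"
    hence "before w (w ! i) (w ! j)" using h by simp
    thus "i < j" using before_pos[OF d] pos_nth[OF d] ij by simp
  qed
qed

lemma SF_before:
  assumes "heap_forest ps"
  shows "w \<in> S_F ps \<longleftrightarrow> distinct w \<and> set w = {0..<length ps} \<and> (\<forall>i j. f_reach ps i j \<longrightarrow> before w j i)"
proof -
  have pos_cond: "(\<forall>p<length w. \<forall>q<length w. f_reach ps (w ! q) (w ! p) \<longrightarrow> p < q)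
      \<longleftrightarrow> (\<forall>i j. f_reach ps i j \<longrightarrow> before w j i)"
    if "distinct w" "set w = {0..<length ps}"
  proof -
    have "f_reach ps i j \<Longrightarrow> i \<in> set w \<and> j \<in> set w" for i j
      using that(2) f_reach_src f_reach_dec[OF assms] by fastforce
    hence "(\<forall>a\<in>set w. \<forall>b\<in>set w. f_reach ps b a \<longrightarrow> before w a b) \<longleftrightarrow> (\<forall>i j. f_reach ps i j \<longrightarrow> before w j i)"
      by blast
    thus ?thesis using positions_iff_before[OF that(1), of "\<lambda>a b. f_reach ps b a"] by simp
  qed
  show ?thesis
  proof (cases "distinct w \<and> set w = {0..<length ps}")
    case True thus ?thesis using pos_cond unfolding S_F_def by auto
  next
    case False thus ?thesis unfolding S_F_def by auto
  qed
qed

lemma Sh_before: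
  "e \<in> Sh k k2 \<longleftrightarrow> distinct e \<and> set e = {0..<k+k2} \<and> (\<forall>a b. a < b \<and> b < k \<longrightarrow> before e a b)
     \<and> (\<forall>a b. k \<le> a \<and> a < b \<and> b < k + k2 \<longrightarrow> before e a b)"
proof -
  let ?P = "\<lambda>a b. (a < b \<and> b < k) \<or> (k \<le> a \<and> a < b \<and> b < k + k2)"
  have pos_cond: "(\<forall>i<length e. \<forall>j<length e. ?P (e ! i) (e ! j) \<longrightarrow> i < j)
      \<longleftrightarrow> (\<forall>a b. a < b \<and> b < k \<longrightarrow> before e a b) \<and> (\<forall>a b. k \<le> a \<and> a < b \<and> b < k + k2 \<longrightarrow> before e a b)"
    if "distinct e" "set e = {0..<k+k2}"
  proof -
    have "(\<forall>a\<in>set e. \<forall>b\<in>set e. ?P a b \<longrightarrow> before e a b)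
      \<longleftrightarrow> (\<forall>a b. a < b \<and> b < k \<longrightarrow> before e a b) \<and> (\<forall>a b. k \<le> a \<and> a < b \<and> b < k + k2 \<longrightarrow> before e a b)"
      (is "?L \<longleftrightarrow> ?R")
    proof
      assume ?L thus ?R using that(2) by (intro conjI allI impI) auto
    next
      assume ?R thus ?L by blast
    qed
    thus ?thesis using positions_iff_before[OF that(1), of ?P] by simp
  qed
  show ?thesis
  proof (cases "distinct e \<and> set e = {0..<k+k2}")
    case True thus ?thesis using pos_cond unfolding Sh_def by simp
  next
    case False thus ?thesis unfolding Sh_def by auto
  qed
qed

lemma Sh_perm_words: "e \<in> Sh k k2 \<Longrightarrow> e \<in> perm_words (k + k2)"
  unfolding Sh_before perm_words_def by blast

lemma before_append_D:
  assumes "distinct (xs @ ys)" "before (xs @ ys) a b"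
  shows "a \<in> set xs \<Longrightarrow> b \<in> set xs \<Longrightarrow> before xs a b" "a \<in> set ys \<Longrightarrow> b \<in> set ys \<Longrightarrow> before ys a b"
  using before_filter_I[OF assms(2), of "\<lambda>x. x \<in> set xs"] before_filter_I[OF assms(2), of "\<lambda>x. x \<in> set ys"]
    filter_app_L[OF assms(1)] filter_app_R[OF assms(1)] by auto

section \<open>Theta is bijective\<close>

text \<open>Every word is
  a linear extension of its forest and, in fact, its lexicographically largest one; since there
  are n! words and n! heap-ordered forests on n vertices, this is a bijection.\<close>

abbreviation lex_less :: "nat list \<Rightarrow> nat list \<Rightarrow> bool" where "lex_less \<equiv> ord_class.lexordp"

lemma S_F_perm_words: "w \<in> S_F ps \<Longrightarrow> w \<in> perm_words (length ps)"
  by (auto simp: S_F_def perm_words_def)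

definition left_parent :: "nat list \<Rightarrow> nat \<Rightarrow> nat option" where
  "left_parent w i = (if {s. s < pos w i \<and> w ! s < i} = {} then None
              else Some (w ! Max {s. s < pos w i \<and> w ! s < i}))"

definition forest_of_word :: "nat list \<Rightarrow> nat option list" where
  "forest_of_word w = map (left_parent w) [0..<length w]"

lemma left_parent_Some:
  assumes "left_parent w i = Some j"
  shows "\<exists>m. m < pos w i \<and> w ! m < i \<and> j = w ! m"
proof -
  let ?C = "{s. s < pos w i \<and> w ! s < i}"
  have ne: "?C \<noteq> {}" and j: "j = w ! Max ?C" using assms by (auto simp: left_parent_def split: if_splits)
  have "finite ?C" by (rule finite_subset[of _ "{..<pos w i}"]) auto
  hence "Max ?C \<in> ?C" using ne by (rule Max_in)
  thus ?thesis using j by auto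
qed

lemma forest_of_word_heap: "heap_forest (forest_of_word w)"
  unfolding heap_forest_def
proof (intro allI impI)
  fix i j assume "i < length (forest_of_word w)" "forest_of_word w ! i = Some j"
  hence "left_parent w i = Some j" by (simp add: forest_of_word_def)
  from left_parent_Some[OF this] show "j < i" by auto
qed

lemma forest_of_word_length[simp]: "length (forest_of_word w) = length w" by (simp add: forest_of_word_def)

lemma forest_of_word_edge_pos:
  assumes "w \<in> perm_words n" "i < length (forest_of_word w)" "forest_of_word w ! i = Some j"
  shows "pos w j < pos w i"
proof -
  have d: "distinct w" and s: "set w = {0..<n}" using assms(1) by (auto simp: perm_words_def)
  have ln: "length w = n" using perm_words_length[OF assms(1)] .
  from assms(2,3) have "left_parent w i = Some j" by (simp add: forest_of_word_def)
  then obtain m where m: "m < pos w i" "j = w ! m" using left_parent_Some by blast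
  have "i < n" using assms(2) ln by simp
  hence "pos w i < length w" using pos_prop[OF d] s by auto
  hence "pos w j = m" using m pos_nth[OF d] by auto
  thus ?thesis using m by simp
qed

lemma forest_of_word_reach_pos:
  assumes "w \<in> perm_words n" "f_reach (forest_of_word w) i j"
  shows "pos w j < pos w i"
  using assms(2) unfolding f_reach_def
proof (induct rule: trancl_induct)
  case (base y)
  hence "i < length (forest_of_word w)" "forest_of_word w ! i = Some y" by (auto simp: f_edges_def)
  thus ?case by (rule forest_of_word_edge_pos[OF assms(1)])
next
  case (step y z)
  hence "y < length (forest_of_word w)" "forest_of_word w ! y = Some z" by (auto simp: f_edges_def)
  hence "pos w z < pos w y" by (rule forest_of_word_edge_pos[OF assms(1)])
  thus ?case using step(3) by simp
qed

lemma forest_of_word_S_F: "w \<in> perm_words n \<Longrightarrow> w \<in> S_F (forest_of_word w)"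
proof -
  assume w: "w \<in> perm_words n"
  have d: "distinct w" and s: "set w = {0..<n}" using w by (auto simp: perm_words_def)
  have ln: "length w = n" using perm_words_length[OF w] .
  show ?thesis unfolding S_F_def
  proof (intro CollectI conjI allI impI)
    show "distinct w" by (rule d)
    show "set w = {0..<length (forest_of_word w)}" using s ln by simp
    fix p q assume pq: "p < length w" "q < length w" "f_reach (forest_of_word w) (w ! p) (w ! q)"
    from forest_of_word_reach_pos[OF w pq(3)] show "q < p" using pos_nth[OF d] pq by simp
  qed
qed

lemma first_diff:
  assumes "length u = length v" "u \<noteq> v"
  shows "\<exists>t<length u. take t u = take t v \<and> u ! t \<noteq> v ! t"
proof -
  have ex: "\<exists>t. t < length u \<and> u ! t \<noteq> v ! t"
  proof (rule ccontr)
    assume "\<not> ?thesis"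
    hence "u = v" using assms(1) by (intro nth_equalityI) auto
    thus False using assms(2) by simp
  qed
  define t where "t = (LEAST t. t < length u \<and> u ! t \<noteq> v ! t)"
  have t: "t < length u" "u ! t \<noteq> v ! t" using LeastI_ex[OF ex] unfolding t_def by auto
  have "\<forall>i<t. u ! i = v ! i" using not_less_Least t(1) unfolding t_def by fastforce
  hence "take t u = take t v" using t(1) assms(1) by (intro nth_equalityI) auto
  thus ?thesis using t by blast
qed

lemma lexordp_first_diff:
  assumes "length u = length v" "t < length u" "take t u = take t v" "u ! t < v ! t"
  shows "lex_less u v"
proof -
  have "u = take t u @ u ! t # drop (Suc t) u" using assms(2) by (simp add: id_take_nth_drop)
  moreover have "v = take t u @ v ! t # drop (Suc t) v" using assms by (metis id_take_nth_drop)
  moreover have "lex_less (take t u @ u ! t # drop (Suc t) u) (take t u @ v ! t # drop (Suc t) v)"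
    by (rule lexordp_append_left_rightI) (rule assms(4))
  ultimately show ?thesis by simp
qed

lemma forest_of_word_reach_left:
  assumes w: "w \<in> perm_words n" and b: "b < n" and t: "t < pos w b" "w ! t < b"
  shows "\<exists>m. t \<le> m \<and> m < n \<and> f_reach (forest_of_word w) b (w ! m)"
proof -
  have d: "distinct w" and s: "set w = {0..<n}" using w by (auto simp: perm_words_def)
  have ln: "length w = n" using perm_words_length[OF w] .
  let ?C = "{s. s < pos w b \<and> w ! s < b}"
  have tC: "t \<in> ?C" using t by simp
  have fC: "finite ?C" by (rule finite_subset[of _ "{..<pos w b}"]) auto
  define m where "m = Max ?C"
  have mC: "m \<in> ?C" using Max_in[OF fC] tC unfolding m_def by blast
  have tm: "t \<le> m" using Max_ge[OF fC tC] unfolding m_def .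
  have "left_parent w b = Some (w ! m)" using tC by (auto simp: left_parent_def m_def)
  hence "forest_of_word w ! b = Some (w ! m)" using b ln by (simp add: forest_of_word_def)
  hence "f_reach (forest_of_word w) b (w ! m)" by (intro edge_reach) (use b ln in auto)
  moreover have "m < n" using mC pos_prop[OF d] b s ln by fastforce
  ultimately show ?thesis using tm by blast
qed

text \<open>The word w is the lexicographically largest linear extension of its forest: compare a
  linear extension w' with w at the first position t where they differ; if w' had the larger
  letter b there, b would reach a vertex w!m with m \<ge> t, which w' lists before position t.\<close>
lemma forest_of_word_max:
  assumes w: "w \<in> perm_words n" and w': "w' \<in> S_F (forest_of_word w)"
  shows "w' = w \<or> lex_less w' w"
proof (rule ccontr)
  assume c: "\<not> (w' = w \<or> lex_less w' w)"
  have d: "distinct w" and s: "set w = {0..<n}" using w by (auto simp: perm_words_def)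
  have ln: "length w = n" using perm_words_length[OF w] .
  have w'P: "w' \<in> perm_words n" using S_F_perm_words[OF w'] ln by simp
  have d': "distinct w'" and s': "set w' = {0..<n}" using w'P by (auto simp: perm_words_def)
  have ln': "length w' = n" using perm_words_length[OF w'P] .
  obtain t where t: "t < n" "take t w' = take t w" "w' ! t \<noteq> w ! t"
    using first_diff[of w' w] c ln ln' by auto
  have pre: "\<And>i. i < t \<Longrightarrow> w' ! i = w ! i" using t(2) by (metis nth_take)
  define b where "b = w' ! t"
  have "\<not> b < w ! t" using lexordp_first_diff[of w' w t] c t ln ln' by (auto simp: b_def)
  hence ab: "w ! t < b" using t(3) by (simp add: b_def)
  have bn: "b < n" using s' t(1) ln' by (auto simp: b_def)
  have sb: "pos w b < n" "w ! pos w b = b" using pos_prop[OF d] s bn ln by auto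
  have "\<not> pos w b < t"
  proof
    assume lt: "pos w b < t"
    hence "w' ! pos w b = w' ! t" using pre sb by (simp add: b_def)
    thus False using nth_eq_iff_index_eq[OF d'] lt t(1) ln' by auto
  qed
  moreover have "pos w b \<noteq> t" using sb(2) t(3) b_def by auto
  ultimately have "t < pos w b" by simp
  then obtain m where m: "t \<le> m" "m < n" "f_reach (forest_of_word w) b (w ! m)"
    using forest_of_word_reach_left[OF w bn _ ab] by blast
  define q where "q = pos w' (w ! m)"
  have "w ! m \<in> set w'" using s s' m(2) ln by auto
  hence q: "q < n" "w' ! q = w ! m" using pos_prop[OF d'] ln' by (auto simp: q_def)
  have "f_reach (forest_of_word w) (w' ! t) (w' ! q)" using m(3) q(2) by (simp add: b_def)
  hence "q < t" using w' t(1) q(1) ln' unfolding S_F_def by blast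
  hence "w ! q = w ! m" using pre q by simp
  hence "q = m" using d q m(2) ln nth_eq_iff_index_eq by auto
  thus False using m(1) \<open>q < t\<close> by simp
qed

lemma forest_of_word_inj: "inj_on forest_of_word (perm_words n)"
proof (rule inj_onI)
  fix u v assume u: "u \<in> perm_words n" and v: "v \<in> perm_words n" and e: "forest_of_word u = forest_of_word v"
  have vu: "v = u \<or> lex_less v u" using forest_of_word_max[OF u] forest_of_word_S_F[OF v] e by simp
  have uv: "u = v \<or> lex_less u v" using forest_of_word_max[OF v] forest_of_word_S_F[OF u] e by simp
  show "u = v"
  proof (rule ccontr)
    assume "u \<noteq> v"
    hence "lex_less v u" "lex_less u v" using vu uv by auto
    hence "lex_less u u" by (rule lexordp_trans[rotated])
    thus False by (simp add: lexordp_irreflexive')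
  qed
qed

text \<open>Counting heap-ordered forests: the last vertex may be a root or a child of any other vertex.\<close>

definition heap_forests :: "nat \<Rightarrow> nat option list set" where
  "heap_forests n = {ps. length ps = n \<and> heap_forest ps}"

definition parent_choices :: "nat \<Rightarrow> nat option set" where
  "parent_choices n = insert None (Some ` {0..<n})"

lemma heap_forest_snoc: "heap_forest (ps @ [oo]) \<longleftrightarrow> heap_forest ps \<and> (\<forall>j. oo = Some j \<longrightarrow> j < length ps)"
proof
  assume h: "heap_forest (ps @ [oo])"
  have "heap_forest ps" unfolding heap_forest_def
  proof (intro allI impI)
    fix i j assume "i < length ps" "ps ! i = Some j"
    thus "j < i" using h[unfolded heap_forest_def, rule_format, of i j] by (simp add: nth_append)
  qed
  moreover have "\<forall>j. oo = Some j \<longrightarrow> j < length ps"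
    using h[unfolded heap_forest_def, rule_format, of "length ps"] by simp
  ultimately show "heap_forest ps \<and> (\<forall>j. oo = Some j \<longrightarrow> j < length ps)" by blast
next
  assume h: "heap_forest ps \<and> (\<forall>j. oo = Some j \<longrightarrow> j < length ps)"
  show "heap_forest (ps @ [oo])" unfolding heap_forest_def
  proof (intro allI impI)
    fix i j assume i: "i < length (ps @ [oo])" "(ps @ [oo]) ! i = Some j"
    show "j < i"
    proof (cases "i < length ps")
      case True thus ?thesis using i h by (auto simp: nth_append heap_forest_def)
    next
      case False hence "i = length ps" using i by simp
      thus ?thesis using i h by simp
    qed
  qed
qed

lemma heap_forests_Suc: "heap_forests (Suc n) = (\<lambda>(ps, oo). ps @ [oo]) ` (heap_forests n \<times> parent_choices n)"
proof (rule set_eqI)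
  fix qs show "qs \<in> heap_forests (Suc n) \<longleftrightarrow> qs \<in> (\<lambda>(ps, oo). ps @ [oo]) ` (heap_forests n \<times> parent_choices n)"
  proof
    assume q: "qs \<in> heap_forests (Suc n)"
    hence lq: "length qs = Suc n" and hq: "heap_forest qs" by (auto simp: heap_forests_def)
    define ps where "ps = butlast qs"
    define oo where "oo = last qs"
    have "qs \<noteq> []" using lq by auto
    hence qs: "qs = ps @ [oo]" by (simp add: ps_def oo_def)
    have lp: "length ps = n" using lq by (simp add: ps_def)
    have "heap_forest ps \<and> (\<forall>j. oo = Some j \<longrightarrow> j < length ps)"
      using hq unfolding qs heap_forest_snoc .
    hence "ps \<in> heap_forests n" using lp by (auto simp: heap_forests_def)
    moreover have "oo \<in> parent_choices n"
    proof (cases oo)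
      case (Some j) thus ?thesis using \<open>heap_forest ps \<and> _\<close> lp by (auto simp: parent_choices_def)
    qed (simp add: parent_choices_def)
    ultimately have "ps \<in> heap_forests n" "oo \<in> parent_choices n" by auto
    thus "qs \<in> (\<lambda>(ps, oo). ps @ [oo]) ` (heap_forests n \<times> parent_choices n)" using qs by (intro image_eqI[of _ _ "(ps, oo)"]) auto
  next
    assume "qs \<in> (\<lambda>(ps, oo). ps @ [oo]) ` (heap_forests n \<times> parent_choices n)"
    then obtain ps oo where qs: "qs = ps @ [oo]" and p: "ps \<in> heap_forests n" and o: "oo \<in> parent_choices n" by auto
    have "heap_forest ps" "length ps = n" using p by (auto simp: heap_forests_def)
    moreover have "\<forall>j. oo = Some j \<longrightarrow> j < length ps" using o \<open>length ps = n\<close> by (auto simp: parent_choices_def)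
    ultimately have "heap_forest qs" unfolding qs heap_forest_snoc by blast
    thus "qs \<in> heap_forests (Suc n)" using qs \<open>length ps = n\<close> by (simp add: heap_forests_def)
  qed
qed

lemma finite_heap_forests: "finite (heap_forests n)"
proof (induct n)
  case 0
  have "heap_forests 0 = {[]}" by (auto simp: heap_forests_def heap_forest_def)
  thus ?case by simp
next
  case (Suc n)
  have "finite (parent_choices n)" by (simp add: parent_choices_def)
  thus ?case unfolding heap_forests_Suc using Suc by simp
qed

lemma card_heap_forests: "card (heap_forests n) = fact n"
proof (induct n)
  case 0
  have "heap_forests 0 = {[]}" by (auto simp: heap_forests_def heap_forest_def)
  thus ?case by simp
next
  case (Suc n)
  have inj: "inj_on (\<lambda>(ps, oo). ps @ [oo]) (heap_forests n \<times> parent_choices n)" by (rule inj_onI) auto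
  have "card (parent_choices n) = Suc n" unfolding parent_choices_def by (simp add: card_image)
  thus ?case unfolding heap_forests_Suc card_image[OF inj] card_cartesian_product Suc by simp
qed

lemma forest_of_word_image: "forest_of_word ` perm_words n = heap_forests n"
proof -
  have sub: "forest_of_word ` perm_words n \<subseteq> heap_forests n" using forest_of_word_heap perm_words_length by (auto simp: heap_forests_def)
  have "card (forest_of_word ` perm_words n) = card (heap_forests n)"
    using card_image[OF forest_of_word_inj] card_perm_words card_heap_forests by simp
  thus ?thesis using card_subset_eq[OF finite_heap_forests sub] by simp
qed

lemma forest_of_word_surj:
  assumes "heap_ordered ps"
  shows "\<exists>w\<in>perm_words (length ps). forest_of_word w = ps"
proof -
  have "ps \<in> heap_forests (length ps)" using assms by (simp add: heap_forests_def heap_ordered_iff)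
  hence "ps \<in> forest_of_word ` perm_words (length ps)" using forest_of_word_image by simp
  thus ?thesis by blast
qed

lemma theta_basis_forest_of_word:
  assumes w: "w \<in> perm_words n"
  shows "theta_basis (forest_of_word w, l) =
    (\<lambda>p. bvec (w, l) p + (\<Sum>u\<in>S_F (forest_of_word w) - {w}. bvec (u, l) p :: 'k::semiring_1))"
proof (rule ext)
  fix p
  have "theta_basis (forest_of_word w, l) p = (\<Sum>u\<in>S_F (forest_of_word w). bvec (u, l) p :: 'k)"
    unfolding theta_basis_def by (intro sum.cong) (auto simp: bvec_def)
  also have "\<dots> = bvec (w, l) p + (\<Sum>u\<in>S_F (forest_of_word w) - {w}. bvec (u, l) p)"
    by (rule sum.remove[OF finite_S_F forest_of_word_S_F[OF w]])
  finally show "theta_basis (forest_of_word w, l) p =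
    bvec (w, l) p + (\<Sum>u\<in>S_F (forest_of_word w) - {w}. bvec (u, l) p :: 'k)" .
qed

text \<open>Hence every decorated permutation is hit, by induction along the lexicographic order.\<close>
lemma Theta_hits_basis:
  fixes l :: "nat list"
  assumes "\<forall>x\<in>set l. 1 \<le> x \<and> x \<le> d"
  shows "w \<in> perm_words (length l) \<Longrightarrow> \<exists>x\<in>fvec (HF d). Theta x = (bvec (w, l) :: dperm \<Rightarrow> 'k::comm_ring_1)"
proof (induct "card {u \<in> perm_words (length l). lex_less u w}" arbitrary: w rule: less_induct)
  case less
  let ?n = "length l"
  have w: "w \<in> perm_words ?n" by fact
  define R where "R = S_F (forest_of_word w) - {w}"
  have fR: "finite R" using finite_S_F by (simp add: R_def)
  have "\<exists>x\<in>fvec (HF d). Theta x = (bvec (u, l) :: dperm \<Rightarrow> 'k)" if u: "u \<in> R" for u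
  proof -
    have uS: "u \<in> S_F (forest_of_word w)" "u \<noteq> w" using u by (auto simp: R_def)
    have luw: "lex_less u w" using forest_of_word_max[OF w uS(1)] uS(2) by simp
    have uP: "u \<in> perm_words ?n" using S_F_perm_words[OF uS(1)] perm_words_length[OF w] by simp
    have sub: "{u' \<in> perm_words ?n. lex_less u' u} \<subseteq> {u' \<in> perm_words ?n. lex_less u' w}"
      using luw lexordp_trans by blast
    have "u \<in> {u' \<in> perm_words ?n. lex_less u' w}" "u \<notin> {u' \<in> perm_words ?n. lex_less u' u}"
      using uP luw by (auto simp: lexordp_irreflexive')
    hence "card {u' \<in> perm_words ?n. lex_less u' u} < card {u' \<in> perm_words ?n. lex_less u' w}"
      using sub finite_perm_words by (intro psubset_card_mono) auto
    thus ?thesis using less(1) uP by blast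
  qed
  then obtain xs where xs: "\<And>u. u \<in> R \<Longrightarrow> xs u \<in> fvec (HF d) \<and> Theta (xs u) = (bvec (u, l) :: dperm \<Rightarrow> 'k)"
    by metis
  have Fh: "(forest_of_word w, l) \<in> HF d"
    using assms forest_of_word_heap perm_words_length[OF w] by (simp add: HF_def heap_ordered_iff)
  let ?y = "\<lambda>F. \<Sum>u\<in>R. (-1) * xs u F"
  let ?x = "\<lambda>F. 1 * bvec (forest_of_word w, l) F + ?y F"
  have yf: "?y \<in> fvec (HF d)" by (rule fvec_lincomb[OF fR]) (use xs in auto)
  have "Theta ?y = (\<lambda>p. \<Sum>u\<in>R. (-1) * bvec (u, l) p)"
    using Theta_lincomb[OF fR, where c="\<lambda>_. -1" and y=xs] xs by (simp add: fvec_def)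
  hence "Theta ?x = (\<lambda>p. theta_basis (forest_of_word w, l) p + (\<Sum>u\<in>R. (-1) * bvec (u, l) p))"
    using Theta_linear[of "bvec (forest_of_word w, l)" ?y 1] yf
    by (simp add: fvec_def supp_bvec Theta_bvec)
  also have "\<dots> = bvec (w, l)"
    by (simp add: theta_basis_forest_of_word[OF w] R_def sum_negf)
  finally show ?case using fvec_lin[OF bvec_fvec[OF Fh] yf] by blast
qed

text \<open>Injectivity: among the forests in the support of a nonzero vector take one whose word is lexicographically maximal; its word occurs in no other image.\<close>

lemma lex_maximal_exists:
  assumes "finite A" "A \<noteq> {}"
  shows "\<exists>a\<in>A. \<forall>b\<in>A. \<not> lex_less (f a) (f b)"
  using assms
proof (induct rule: finite_ne_induct)
  case (singleton x) thus ?case by (simp add: lexordp_irreflexive')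
next
  case (insert x A)
  then obtain m where m: "m \<in> A" "\<forall>b\<in>A. \<not> lex_less (f m) (f b)" by blast
  show ?case
  proof (cases "lex_less (f m) (f x)")
    case True
    have "\<forall>b\<in>insert x A. \<not> lex_less (f x) (f b)"
    proof
      fix b assume "b \<in> insert x A"
      thus "\<not> lex_less (f x) (f b)"
      proof
        assume "b = x" thus ?thesis by (simp add: lexordp_irreflexive')
      next
        assume b: "b \<in> A"
        show ?thesis
        proof
          assume "lex_less (f x) (f b)"
          hence "lex_less (f m) (f b)" using True lexordp_trans by blast
          thus False using m b by blast
        qed
      qed
    qed
    thus ?thesis by blast
  next
    case False thus ?thesis using m by blast
  qed
qed

definition max_word :: "nat option list \<Rightarrow> nat list" where
  "max_word ps = (SOME w. w \<in> perm_words (length ps) \<and> forest_of_word w = ps)"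

lemma max_word_prop: "heap_ordered ps \<Longrightarrow> max_word ps \<in> perm_words (length ps) \<and> forest_of_word (max_word ps) = ps"
proof -
  assume "heap_ordered ps"
  hence "\<exists>w. w \<in> perm_words (length ps) \<and> forest_of_word w = ps" using forest_of_word_surj by blast
  thus ?thesis unfolding max_word_def by (rule someI_ex)
qed

lemma S_F_below_max_word:
  assumes "heap_ordered ps" "v \<in> S_F ps"
  shows "v = max_word ps \<or> lex_less v (max_word ps)"
  using forest_of_word_max[of "max_word ps" "length ps" v] max_word_prop[OF assms(1)] assms(2) by simp

lemma Theta_zero:
  assumes x: "x \<in> fvec (HF d)" and z: "Theta (x :: dforest \<Rightarrow> 'k::comm_ring_1) = (\<lambda>_. 0)"
  shows "x = (\<lambda>_. 0)"
proof (rule ccontr)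
  assume "x \<noteq> (\<lambda>_. 0)"
  hence ne: "supp x \<noteq> {}" by (auto simp: supp_def)
  have f: "finite (supp x)" using x by (simp add: fvec_def)
  have HF: "\<And>F. F \<in> supp x \<Longrightarrow> heap_ordered (fst F)" using x by (auto simp: fvec_def HF_def)
  obtain F0 where F0: "F0 \<in> supp x" "\<forall>G\<in>supp x. \<not> lex_less (max_word (fst F0)) (max_word (fst G))"
    using lex_maximal_exists[OF f ne, of "\<lambda>F. max_word (fst F)"] by blast
  define v where "v = max_word (fst F0)"
  have v: "v \<in> perm_words (length (fst F0))" "forest_of_word v = fst F0" using max_word_prop[OF HF[OF F0(1)]] by (auto simp: v_def)
  have "Theta x (v, snd F0) = (\<Sum>G\<in>supp x. x G * theta_basis G (v, snd F0))"
    by (rule Theta_eval)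
  also have "\<dots> = (\<Sum>G\<in>supp x. if G = F0 then x G else 0)"
  proof (rule sum.cong[OF refl])
    fix G assume G: "G \<in> supp x"
    show "x G * theta_basis G (v, snd F0) = (if G = F0 then x G else 0)"
    proof (cases "G = F0")
      case True
      have "v \<in> S_F (fst F0)" using forest_of_word_S_F[OF v(1)] v(2) by simp
      thus ?thesis using True by (simp add: theta_basis_val)
    next
      case False
      have "theta_basis G (v, snd F0) = (0::'k)"
      proof (rule ccontr)
        assume "theta_basis G (v, snd F0) \<noteq> (0::'k)"
        hence vS: "v \<in> S_F (fst G)" and l: "snd F0 = snd G" by (auto simp: theta_basis_val split: if_splits)
        have "v = max_word (fst G)"
          using S_F_below_max_word[OF HF[OF G] vS] F0(2) G by (auto simp: v_def)
        hence "fst G = fst F0" using max_word_prop[OF HF[OF G]] v(2) by simp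
        hence "G = F0" using l by (cases G, cases F0) auto
        thus False using False by simp
      qed
      thus ?thesis using False by simp
    qed
  qed
  also have "\<dots> = x F0" using f F0(1) by (simp add: sum.delta')
  finally have "Theta x (v, snd F0) = x F0" .
  moreover have "x F0 \<noteq> 0" using F0(1) by (simp add: supp_def)
  ultimately show False using z by simp
qed

lemma Theta_inj: "inj_on (Theta :: (dforest \<Rightarrow> 'k::comm_ring_1) \<Rightarrow> dperm \<Rightarrow> 'k) (fvec (HF d))"
proof (rule inj_onI)
  fix x y :: "dforest \<Rightarrow> 'k" assume x: "x \<in> fvec (HF d)" and y: "y \<in> fvec (HF d)" and e: "Theta x = Theta y"
  let ?z = "\<lambda>F. (-1) * y F + x F"
  have zf: "?z \<in> fvec (HF d)" by (rule fvec_lin[OF y x])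
  have "Theta ?z = (\<lambda>p. (-1) * Theta y p + Theta x p)"
    by (rule Theta_linear) (use x y in \<open>auto simp: fvec_def\<close>)
  also have "\<dots> = (\<lambda>_. 0)" using e by simp
  finally have "?z = (\<lambda>_. 0)" using Theta_zero[OF zf] by blast
  thus "x = y" by (auto simp: fun_eq_iff)
qed

lemma Theta_surj:
  assumes z: "z \<in> fvec (DP d)"
  shows "\<exists>x\<in>fvec (HF d). Theta x = (z :: dperm \<Rightarrow> 'k::comm_ring_1)"
proof -
  have f: "finite (supp z)" and sD: "supp z \<subseteq> DP d" using z by (auto simp: fvec_def)
  have "\<And>q. q \<in> supp z \<Longrightarrow> \<exists>x\<in>fvec (HF d). Theta x = (bvec q :: dperm \<Rightarrow> 'k)"
  proof -
    fix q assume "q \<in> supp z"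
    hence q: "q \<in> DP d" using sD by blast
    obtain w l where wl: "q = (w, l)" by (cases q)
    have "w \<in> perm_words (length l)" "\<forall>x\<in>set l. 1 \<le> x \<and> x \<le> d" using q wl by (auto simp: DP_def perm_words_def)
    thus "\<exists>x\<in>fvec (HF d). Theta x = (bvec q :: dperm \<Rightarrow> 'k)" using Theta_hits_basis wl by blast
  qed
  then obtain xs where xs: "\<And>q. q \<in> supp z \<Longrightarrow> xs q \<in> fvec (HF d) \<and> Theta (xs q) = (bvec q :: dperm \<Rightarrow> 'k)"
    by metis
  let ?x = "\<lambda>F. \<Sum>q\<in>supp z. z q * xs q F"
  have "?x \<in> fvec (HF d)" by (rule fvec_lincomb[OF f]) (use xs in auto)
  moreover have "Theta ?x = z"
  proof -
    have "Theta ?x = (\<lambda>p. \<Sum>q\<in>supp z. z q * Theta (xs q) p)"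
      by (rule Theta_lincomb[OF f]) (use xs in \<open>auto simp: fvec_def\<close>)
    also have "\<dots> = (\<lambda>p. \<Sum>q\<in>supp z. z q * bvec q p)" using xs by simp
    also have "\<dots> = z"
    proof (rule ext)
      fix p
      have "(\<Sum>q\<in>supp z. z q * bvec q p) = (\<Sum>q\<in>supp z. if q = p then z q else 0)"
        by (intro sum.cong refl) (simp add: bvec_def eq_commute)
      also have "\<dots> = z p" using f by (simp add: sum.delta') (simp add: supp_def)
      finally show "(\<Sum>q\<in>supp z. z q * bvec q p) = z p" .
    qed
    finally show ?thesis .
  qed
  ultimately show ?thesis by blast
qed

lemma Theta_bij: "bij_betw (Theta :: (dforest \<Rightarrow> 'k::comm_ring_1) \<Rightarrow> dperm \<Rightarrow> 'k) (fvec (HF d)) (fvec (DP d))"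
  unfolding bij_betw_def
proof
  show "inj_on (Theta :: (dforest \<Rightarrow> 'k::comm_ring_1) \<Rightarrow> dperm \<Rightarrow> 'k) (fvec (HF d))" by (rule Theta_inj)
  show "Theta ` fvec (HF d) = (fvec (DP d) :: (dperm \<Rightarrow> 'k) set)"
    using Theta_into Theta_surj by blast
qed

section \<open>Theta is multiplicative\<close>

definition shift_parents :: "nat \<Rightarrow> nat option list \<Rightarrow> nat option list" where
  "shift_parents k qs = map (map_option (\<lambda>j. j + k)) qs"

lemma heap_forest_concat:
  assumes "heap_forest ps" "heap_forest qs"
  shows "heap_forest (ps @ shift_parents (length ps) qs)"
  unfolding heap_forest_def
proof (intro allI impI)
  fix i j assume i: "i < length (ps @ shift_parents (length ps) qs)" "(ps @ shift_parents (length ps) qs) ! i = Some j"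
  show "j < i"
  proof (cases "i < length ps")
    case True thus ?thesis using i assms(1) by (simp add: nth_append heap_forest_def)
  next
    case False
    hence e: "map_option (\<lambda>j. j + length ps) (qs ! (i - length ps)) = Some j"
      and il: "i - length ps < length qs" using i by (auto simp: nth_append shift_parents_def)
    then obtain j' where j': "qs ! (i - length ps) = Some j'" "j = j' + length ps" by auto
    have "j' < i - length ps" using assms(2) j'(1) il by (simp add: heap_forest_def)
    thus ?thesis using j' False by simp
  qed
qed

lemma edges_concat:
  assumes "k = length ps"
  shows "f_edges (ps @ shift_parents k qs) = f_edges ps \<union> (\<lambda>(i, j). (i + k, j + k)) ` f_edges qs"
proof (rule set_eqI)
  fix x :: "nat \<times> nat"
  obtain i j where x: "x = (i, j)" by (cases x)
  show "x \<in> f_edges (ps @ shift_parents k qs) \<longleftrightarrow> x \<in> f_edges ps \<union> (\<lambda>(i, j). (i + k, j + k)) ` f_edges qs"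
  proof
    assume "x \<in> f_edges (ps @ shift_parents k qs)"
    hence i: "i < length ps + length qs" "(ps @ shift_parents k qs) ! i = Some j" using x by (auto simp: f_edges_def shift_parents_def)
    show "x \<in> f_edges ps \<union> (\<lambda>(i, j). (i + k, j + k)) ` f_edges qs"
    proof (cases "i < length ps")
      case True thus ?thesis using i x by (auto simp: f_edges_def nth_append)
    next
      case False
      hence e: "map_option (\<lambda>j. j + k) (qs ! (i - k)) = Some j" "i - k < length qs"
        using i assms by (auto simp: nth_append shift_parents_def)
      then obtain j' where j': "qs ! (i - k) = Some j'" "j = j' + k" by auto
      have "(i - k, j') \<in> f_edges qs" using j' e by (simp add: f_edges_def)
      moreover have "x = (\<lambda>(i, j). (i + k, j + k)) (i - k, j')" using x j' False assms by simp
      ultimately show ?thesis by blast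
    qed
  next
    assume "x \<in> f_edges ps \<union> (\<lambda>(i, j). (i + k, j + k)) ` f_edges qs"
    thus "x \<in> f_edges (ps @ shift_parents k qs)"
    proof
      assume "x \<in> f_edges ps"
      thus ?thesis using x by (auto simp: f_edges_def nth_append)
    next
      assume "x \<in> (\<lambda>(i, j). (i + k, j + k)) ` f_edges qs"
      then obtain a b where ab: "(a, b) \<in> f_edges qs" "x = (a + k, b + k)" by auto
      have "a < length qs" "qs ! a = Some b" using ab by (auto simp: f_edges_def)
      thus ?thesis using ab assms by (simp add: f_edges_def nth_append shift_parents_def)
    qed
  qed
qed

lemma trancl_shift:
  "(x, y) \<in> ((\<lambda>(i, j). (i + k, j + (k::nat))) ` E)\<^sup>+ \<longleftrightarrow> k \<le> x \<and> k \<le> y \<and> (x - k, y - k) \<in> E\<^sup>+"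
proof
  assume "(x, y) \<in> ((\<lambda>(i, j). (i + k, j + k)) ` E)\<^sup>+"
  thus "k \<le> x \<and> k \<le> y \<and> (x - k, y - k) \<in> E\<^sup>+"
  proof (induct rule: trancl_induct)
    case (base y) thus ?case by auto
  next
    case (step y z)
    then obtain a b where ab: "(a, b) \<in> E" "y = a + k" "z = b + k" by auto
    thus ?case using step(3) by (auto intro: trancl_into_trancl)
  qed
next
  assume h: "k \<le> x \<and> k \<le> y \<and> (x - k, y - k) \<in> E\<^sup>+"
  have "\<And>a b. (a, b) \<in> E\<^sup>+ \<Longrightarrow> (a + k, b + k) \<in> ((\<lambda>(i, j). (i + k, j + k)) ` E)\<^sup>+"
  proof -
    fix a b assume "(a, b) \<in> E\<^sup>+"
    thus "(a + k, b + k) \<in> ((\<lambda>(i, j). (i + k, j + k)) ` E)\<^sup>+"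
    proof (induct rule: trancl_induct)
      case (base y) thus ?case by (intro r_into_trancl) (auto intro: image_eqI[of _ _ "(a, y)"])
    next
      case (step y z)
      have "(y + k, z + k) \<in> (\<lambda>(i, j). (i + k, j + k)) ` E" using step(2) by (auto intro: image_eqI[of _ _ "(y, z)"])
      thus ?case by (rule trancl_into_trancl[OF step(3)])
    qed
  qed
  from this[of "x - k" "y - k"] h show "(x, y) \<in> ((\<lambda>(i, j). (i + k, j + k)) ` E)\<^sup>+" by simp
qed

lemma trancl_union_sep:
  assumes A: "\<And>x y. (x, y) \<in> A \<Longrightarrow> x < (k::nat) \<and> y < k"
      and B: "\<And>x y. (x, y) \<in> B \<Longrightarrow> k \<le> x \<and> k \<le> y"
  shows "(A \<union> B)\<^sup>+ = A\<^sup>+ \<union> B\<^sup>+"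
proof
  show "A\<^sup>+ \<union> B\<^sup>+ \<subseteq> (A \<union> B)\<^sup>+" by (meson Un_least Un_upper1 Un_upper2 trancl_mono subsetI)
  have At: "\<And>x y. (x, y) \<in> A\<^sup>+ \<Longrightarrow> y < k"
  proof -
    fix x y assume "(x, y) \<in> A\<^sup>+" thus "y < k" by (induct rule: trancl_induct) (auto dest: A)
  qed
  have Bt: "\<And>x y. (x, y) \<in> B\<^sup>+ \<Longrightarrow> k \<le> y"
  proof -
    fix x y assume "(x, y) \<in> B\<^sup>+" thus "k \<le> y" by (induct rule: trancl_induct) (auto dest: B)
  qed
  show "(A \<union> B)\<^sup>+ \<subseteq> A\<^sup>+ \<union> B\<^sup>+"
  proof
    fix p assume "p \<in> (A \<union> B)\<^sup>+"
    then obtain x y where p: "p = (x, y)" "(x, y) \<in> (A \<union> B)\<^sup>+" by (cases p) auto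
    from p(2) have "(x, y) \<in> A\<^sup>+ \<union> B\<^sup>+"
    proof (induct rule: trancl_induct)
      case (base y) thus ?case by auto
    next
      case (step y z)
      from step(2) show ?case
      proof
        assume yA: "(y, z) \<in> A"
        have "y < k" using A[OF yA] by simp
        hence "(x, y) \<notin> B\<^sup>+" using Bt by fastforce
        hence "(x, y) \<in> A\<^sup>+" using step(3) by blast
        thus ?case using yA by (auto intro: trancl_into_trancl)
      next
        assume yB: "(y, z) \<in> B"
        have "k \<le> y" using B[OF yB] by simp
        hence "(x, y) \<notin> A\<^sup>+" using At by fastforce
        hence "(x, y) \<in> B\<^sup>+" using step(3) by blast
        thus ?case using yB by (auto intro: trancl_into_trancl)
      qed
    qed
    thus "p \<in> A\<^sup>+ \<union> B\<^sup>+" using p by simp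
  qed
qed

lemma reach_concat:
  assumes "heap_forest ps" "k = length ps"
  shows "f_reach (ps @ shift_parents k qs) i j \<longleftrightarrow> f_reach ps i j \<or> (k \<le> i \<and> k \<le> j \<and> f_reach qs (i - k) (j - k))"
proof -
  have A: "\<And>x y. (x, y) \<in> f_edges ps \<Longrightarrow> x < k \<and> y < k"
  proof -
    fix x y assume "(x, y) \<in> f_edges ps"
    hence "x < length ps" "ps ! x = Some y" by (auto simp: f_edges_def)
    thus "x < k \<and> y < k" using assms by (auto simp: heap_forest_def)
  qed
  have B: "\<And>x y. (x, y) \<in> (\<lambda>(i, j). (i + k, j + k)) ` f_edges qs \<Longrightarrow> k \<le> x \<and> k \<le> y" by auto
  have U: "(f_edges ps \<union> (\<lambda>(i, j). (i + k, j + k)) ` f_edges qs)\<^sup>+ = (f_edges ps)\<^sup>+ \<union> ((\<lambda>(i, j). (i + k, j + k)) ` f_edges qs)\<^sup>+"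
    by (rule trancl_union_sep[OF A B])
  show ?thesis unfolding f_reach_def edges_concat[OF assms(2)] U Un_iff trancl_shift ..
qed

definition concat_shift :: "nat \<Rightarrow> nat list \<Rightarrow> nat list \<Rightarrow> nat list" where
  "concat_shift k u v = u @ map (\<lambda>x. x + k) v"

definition shuffle_word :: "nat \<Rightarrow> nat list \<Rightarrow> nat list \<Rightarrow> nat list \<Rightarrow> nat list" where
  "shuffle_word k u v e = map (\<lambda>i. concat_shift k u v ! i) e"

definition low_part :: "nat \<Rightarrow> nat list \<Rightarrow> nat list" where
  "low_part k w = filter (\<lambda>x. x < k) w"

definition high_part :: "nat \<Rightarrow> nat list \<Rightarrow> nat list" where
  "high_part k w = map (\<lambda>x. x - k) (filter (\<lambda>x. k \<le> x) w)"

lemma shift_image: "(\<lambda>x. x + k) ` {0..<l} = {k..<k + (l::nat)}"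
  by (auto simp: image_iff intro!: bexI[of _ "_ - k"])

lemma shift_down_image: "(\<lambda>x. x - k) ` {k..<k + l} = {0..<(l::nat)}"
  by (auto simp: image_iff intro!: bexI[of _ "_ + k"])

lemma concat_shift_perm:
  assumes "u \<in> perm_words k" "v \<in> perm_words k2"
  shows "concat_shift k u v \<in> perm_words (k + k2)"
proof -
  have d: "distinct u" "distinct v" and s: "set u = {0..<k}" "set v = {0..<k2}"
    using assms by (auto simp: perm_words_def)
  have "distinct (map (\<lambda>x. x + k) v)" using d(2) by (simp add: distinct_map inj_on_def)
  moreover have "set (map (\<lambda>x. x + k) v) = {k..<k+k2}" using s(2) shift_image by simp
  ultimately show ?thesis using d s unfolding perm_words_def concat_shift_def by auto
qed

lemma concat_shift_low: "u \<in> perm_words k \<Longrightarrow> a < k \<Longrightarrow> concat_shift k u v ! a = u ! a"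
  using perm_words_length by (simp add: concat_shift_def nth_append)

lemma concat_shift_high:
  "u \<in> perm_words k \<Longrightarrow> v \<in> perm_words k2 \<Longrightarrow> k \<le> a \<Longrightarrow> a < k + k2 \<Longrightarrow>
    concat_shift k u v ! a = v ! (a - k) + k"
  using perm_words_length[of u k] perm_words_length[of v k2] by (simp add: concat_shift_def nth_append)

lemma map_nth_perm:
  assumes "z \<in> perm_words n" "e \<in> perm_words n"
  shows "map (\<lambda>i. z ! i) e \<in> perm_words n"
proof -
  have d: "distinct z" "distinct e" and s: "set z = {0..<n}" "set e = {0..<n}" and l: "length z = n"
    using assms perm_words_length by (auto simp: perm_words_def)
  have inj: "inj_on (\<lambda>i. z ! i) (set e)" using d(1) s l by (intro inj_on_nth) auto
  have "set (map (\<lambda>i. z ! i) e) = (\<lambda>i. z ! i) ` {0..<n}" using s by simp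
  also have "\<dots> = set z" using l by (auto simp: set_conv_nth)
  finally show ?thesis using inj d s by (simp add: perm_words_def distinct_map)
qed

lemma shuffle_word_perm:
  "u \<in> perm_words k \<Longrightarrow> v \<in> perm_words k2 \<Longrightarrow> e \<in> Sh k k2 \<Longrightarrow> shuffle_word k u v e \<in> perm_words (k + k2)"
  unfolding shuffle_word_def by (rule map_nth_perm[OF concat_shift_perm Sh_perm_words])

lemma low_high_part_perm:
  assumes "w \<in> perm_words (k + k2)"
  shows "low_part k w \<in> perm_words k" "high_part k w \<in> perm_words k2"
proof -
  have dw: "distinct w" and sw: "set w = {0..<k+k2}" using assms by (auto simp: perm_words_def)
  show "low_part k w \<in> perm_words k" using dw sw by (auto simp: low_part_def perm_words_def)
  have "inj_on (\<lambda>x. x - k) (set (filter (\<lambda>x. k \<le> x) w))" by (rule inj_onI) auto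
  moreover have "set (filter (\<lambda>x. k \<le> x) w) = {k..<k+k2}" using sw by auto
  ultimately show "high_part k w \<in> perm_words k2"
    using dw shift_down_image by (simp add: high_part_def perm_words_def distinct_map)
qed

lemma shuffle_word_before_low:
  assumes uP: "u \<in> perm_words k" and vP: "v \<in> perm_words k2" and e: "e \<in> Sh k k2"
    and ab: "before u a b"
  shows "before (shuffle_word k u v e) a b"
proof -
  have du: "distinct u" and su: "set u = {0..<k}" and lu: "length u = k"
    using uP perm_words_length by (auto simp: perm_words_def)
  have a: "a \<in> set u" and b: "b \<in> set u" and pl: "pos u a < pos u b" using before_pos[OF du] ab by auto
  have pa: "pos u a < k" "u ! pos u a = a" using pos_prop[OF du a] lu by auto
  have pb: "pos u b < k" "u ! pos u b = b" using pos_prop[OF du b] lu by auto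
  have "before e (pos u a) (pos u b)" using e pl pb by (simp add: Sh_before)
  hence "before (shuffle_word k u v e) (concat_shift k u v ! pos u a) (concat_shift k u v ! pos u b)"
    unfolding shuffle_word_def by (rule before_map_I)
  thus ?thesis using concat_shift_low[OF uP pa(1)] concat_shift_low[OF uP pb(1)] pa pb by simp
qed

lemma shuffle_word_before_high:
  assumes uP: "u \<in> perm_words k" and vP: "v \<in> perm_words k2" and e: "e \<in> Sh k k2"
    and ab: "before v a b"
  shows "before (shuffle_word k u v e) (a + k) (b + k)"
proof -
  have dv: "distinct v" and lv: "length v = k2" using vP perm_words_length by (auto simp: perm_words_def)
  have a: "a \<in> set v" and b: "b \<in> set v" and pl: "pos v a < pos v b" using before_pos[OF dv] ab by auto
  have pa: "pos v a < k2" "v ! pos v a = a" using pos_prop[OF dv a] lv by auto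
  have pb: "pos v b < k2" "v ! pos v b = b" using pos_prop[OF dv b] lv by auto
  have "before e (pos v a + k) (pos v b + k)" using e pl pb by (simp add: Sh_before)
  hence "before (shuffle_word k u v e) (concat_shift k u v ! (pos v a + k)) (concat_shift k u v ! (pos v b + k))"
    unfolding shuffle_word_def by (rule before_map_I)
  thus ?thesis using concat_shift_high[OF uP vP] pa pb by simp
qed

lemma before_high_part:
  assumes "distinct w" "k \<le> a" "k \<le> b"
  shows "before (high_part k w) (a - k) (b - k) \<longleftrightarrow> before w a b"
proof
  have inj: "inj_on (\<lambda>x. x - k) (set (filter (\<lambda>x. k \<le> x) w))" by (rule inj_onI) auto
  assume h: "before (high_part k w) (a - k) (b - k)"
  hence "a - k \<in> set (high_part k w)" "b - k \<in> set (high_part k w)" by (auto simp: before_def)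
  hence "a \<in> set w" "b \<in> set w"
    using assms(2,3) by (auto simp: high_part_def) (metis le_add_diff_inverse)+
  hence "before (filter (\<lambda>x. k \<le> x) w) a b"
    using h assms(2,3) by (intro before_map_D[OF _ inj]) (auto simp: high_part_def)
  thus "before w a b" by (rule before_filter_D)
next
  assume "before w a b"
  hence "before (filter (\<lambda>x. k \<le> x) w) a b" using assms(2,3) by (intro before_filter_I)
  thus "before (high_part k w) (a - k) (b - k)" unfolding high_part_def by (rule before_map_I)
qed

lemma low_part_shuffle:
  assumes uP: "u \<in> perm_words k" and vP: "v \<in> perm_words k2" and e: "e \<in> Sh k k2"
  shows "low_part k (shuffle_word k u v e) = u"
proof (rule sym, rule eq_by_before)
  have wP: "shuffle_word k u v e \<in> perm_words (k + k2)" by (rule shuffle_word_perm[OF uP vP e])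
  show "distinct u" using uP by (simp add: perm_words_def)
  show "distinct (low_part k (shuffle_word k u v e))"
    using low_high_part_perm(1)[OF wP] by (simp add: perm_words_def)
  show "set u = set (low_part k (shuffle_word k u v e))"
    using uP low_high_part_perm(1)[OF wP] by (simp add: perm_words_def)
  show "\<forall>a b. before u a b \<longrightarrow> before (low_part k (shuffle_word k u v e)) a b"
  proof (intro allI impI)
    fix a b assume ab: "before u a b"
    hence "a < k" "b < k" using uP by (auto simp: before_def perm_words_def)
    thus "before (low_part k (shuffle_word k u v e)) a b"
      unfolding low_part_def using shuffle_word_before_low[OF uP vP e ab] by (intro before_filter_I)
  qed
qed

lemma high_part_shuffle:
  assumes uP: "u \<in> perm_words k" and vP: "v \<in> perm_words k2" and e: "e \<in> Sh k k2"
  shows "high_part k (shuffle_word k u v e) = v"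
proof (rule sym, rule eq_by_before)
  have wP: "shuffle_word k u v e \<in> perm_words (k + k2)" by (rule shuffle_word_perm[OF uP vP e])
  show "distinct v" using vP by (simp add: perm_words_def)
  show "distinct (high_part k (shuffle_word k u v e))"
    using low_high_part_perm(2)[OF wP] by (simp add: perm_words_def)
  show "set v = set (high_part k (shuffle_word k u v e))"
    using vP low_high_part_perm(2)[OF wP] by (simp add: perm_words_def)
  show "\<forall>a b. before v a b \<longrightarrow> before (high_part k (shuffle_word k u v e)) a b"
    using shuffle_word_before_high[OF uP vP e] before_high_part[of _ k "_ + k" "_ + k"] wP
    by (auto simp: perm_words_def)
qed

lemma shuffle_word_inj:
  assumes "u \<in> perm_words k" "v \<in> perm_words k2" "e \<in> Sh k k2"
    "u' \<in> perm_words k" "v' \<in> perm_words k2" "e' \<in> Sh k k2"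
    and eq: "shuffle_word k u v e = shuffle_word k u' v' e'"
  shows "u = u' \<and> v = v' \<and> e = e'"
proof -
  have u: "u = u'" using low_part_shuffle[OF assms(1-3)] low_part_shuffle[OF assms(4-6)] eq by simp
  have v: "v = v'" using high_part_shuffle[OF assms(1-3)] high_part_shuffle[OF assms(4-6)] eq by simp
  have zP: "concat_shift k u v \<in> perm_words (k + k2)" by (rule concat_shift_perm[OF assms(1,2)])
  have dz: "distinct (concat_shift k u v)" and lz: "length (concat_shift k u v) = k + k2"
    using zP perm_words_length by (auto simp: perm_words_def)
  have se: "set e = {0..<k+k2}" "set e' = {0..<k+k2}"
    using Sh_perm_words[OF assms(3)] Sh_perm_words[OF assms(6)] by (auto simp: perm_words_def)
  have inj: "inj_on (\<lambda>i. concat_shift k u v ! i) (set e \<union> set e')" using dz lz se by (intro inj_on_nth) auto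
  have "map (\<lambda>i. concat_shift k u v ! i) e = map (\<lambda>i. concat_shift k u v ! i) e'"
    using eq u v by (simp add: shuffle_word_def)
  hence "e = e'" using inj_on_map_eq_map[OF inj] by simp
  thus ?thesis using u v by simp
qed

lemma positions_perm:
  assumes zP: "z \<in> perm_words n" and wP: "w \<in> perm_words n"
  shows "map (pos z) w \<in> perm_words n" "map (\<lambda>i. z ! i) (map (pos z) w) = w"
proof -
  have dw: "distinct w" and sw: "set w = {0..<n}" using wP by (auto simp: perm_words_def)
  have dz: "distinct z" and sz: "set z = {0..<n}" and lz: "length z = n"
    using zP perm_words_length by (auto simp: perm_words_def)
  have zpos: "\<And>x. x \<in> set w \<Longrightarrow> z ! pos z x = x" using pos_prop[OF dz] sz sw by auto
  have injp: "inj_on (pos z) (set w)" by (rule inj_onI) (metis zpos)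
  have "pos z ` set z = {0..<n}"
  proof
    show "pos z ` set z \<subseteq> {0..<n}" using pos_prop[OF dz] lz by auto
    show "{0..<n} \<subseteq> pos z ` set z"
    proof
      fix a assume "a \<in> {0..<n}"
      hence "z ! a \<in> set z" "pos z (z ! a) = a" using pos_nth[OF dz] lz by auto
      thus "a \<in> pos z ` set z" by (metis image_eqI)
    qed
  qed
  thus "map (pos z) w \<in> perm_words n" using dw injp sz sw by (simp add: perm_words_def distinct_map)
  show "map (\<lambda>i. z ! i) (map (pos z) w) = w" using zpos by (induct w) auto
qed

lemma shuffle_word_split:
  assumes wP: "w \<in> perm_words (k + k2)"
  defines "z \<equiv> concat_shift k (low_part k w) (high_part k w)"
  shows "map (pos z) w \<in> Sh k k2" "shuffle_word k (low_part k w) (high_part k w) (map (pos z) w) = w"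
proof -
  let ?u = "low_part k w" and ?v = "high_part k w" and ?e = "map (pos z) w"
  have dw: "distinct w" using wP by (simp add: perm_words_def)
  have uP: "?u \<in> perm_words k" and vP: "?v \<in> perm_words k2" using low_high_part_perm[OF wP] by auto
  have du: "distinct ?u" and lu: "length ?u = k" using uP perm_words_length by (auto simp: perm_words_def)
  have dv: "distinct ?v" and lv: "length ?v = k2" using vP perm_words_length by (auto simp: perm_words_def)
  have zP: "z \<in> perm_words (k + k2)" unfolding z_def by (rule concat_shift_perm[OF uP vP])
  have dz: "distinct z" and lz: "length z = k + k2"
    using zP perm_words_length by (auto simp: perm_words_def)
  have posz: "\<And>a. a < k + k2 \<Longrightarrow> pos z (z ! a) = a" using pos_nth[OF dz] lz by simp
  have eP: "?e \<in> perm_words (k + k2)" and ew: "map (\<lambda>i. z ! i) ?e = w"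
    using positions_perm[OF zP wP] by auto
  have e_ord: "before ?e a b" if ab: "a < b" "b < k \<or> k \<le> a" "b < k + k2" for a b
  proof -
    have "before w (z ! a) (z ! b)"
    proof (cases "b < k")
      case True
      have "before ?u (?u ! a) (?u ! b)" using before_nth[OF du] ab True lu by simp
      hence "before w (?u ! a) (?u ! b)" unfolding low_part_def by (rule before_filter_D)
      thus ?thesis using concat_shift_low[OF uP] ab True by (simp add: z_def)
    next
      case False
      have "before ?v (?v ! (a - k)) (?v ! (b - k))" using before_nth[OF dv] ab False lv by simp
      hence "before w (?v ! (a - k) + k) (?v ! (b - k) + k)"
        using before_high_part[OF dw, of k "?v ! (a - k) + k" "?v ! (b - k) + k"] by simp
      thus ?thesis using concat_shift_high[OF uP vP] ab False by (simp add: z_def)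
    qed
    hence "before ?e (pos z (z ! a)) (pos z (z ! b))" by (rule before_map_I)
    thus ?thesis using posz ab by simp
  qed
  show "?e \<in> Sh k k2" unfolding Sh_before
  proof (intro conjI allI impI)
    show "distinct ?e" "set ?e = {0..<k+k2}" using eP by (auto simp: perm_words_def)
  next
    fix a b assume "a < b \<and> b < k" thus "before ?e a b" using e_ord by auto
  next
    fix a b assume "k \<le> a \<and> a < b \<and> b < k + k2" thus "before ?e a b" using e_ord by auto
  qed
  show "shuffle_word k ?u ?v ?e = w" using ew by (simp add: shuffle_word_def z_def)
qed
text \<open>Linear extensions of a product forest F G are exactly the shuffles of linear extensions
  of F and of G.\<close>
lemma shuffle_word_in:
  assumes hp: "heap_forest ps" and hq: "heap_forest qs" and k: "k = length ps" and k2: "k2 = length qs"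
    and u: "u \<in> S_F ps" and v: "v \<in> S_F qs" and e: "e \<in> Sh k k2"
  shows "shuffle_word k u v e \<in> S_F (ps @ shift_parents k qs)"
proof -
  have uP: "u \<in> perm_words k" using S_F_perm_words[OF u] k by simp
  have vP: "v \<in> perm_words k2" using S_F_perm_words[OF v] k2 by simp
  have hc: "heap_forest (ps @ shift_parents k qs)" using heap_forest_concat[OF hp hq] k by simp
  have lc: "length (ps @ shift_parents k qs) = k + k2" using k k2 by (simp add: shift_parents_def)
  have "before (shuffle_word k u v e) j i" if r: "f_reach (ps @ shift_parents k qs) i j" for i j
  proof -
    from r reach_concat[OF hp k]
    consider "f_reach ps i j" | "k \<le> i" "k \<le> j" "f_reach qs (i - k) (j - k)" by blast
    thus ?thesis
    proof cases
      case 1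
      hence "before u j i" using u SF_before[OF hp] by blast
      thus ?thesis by (rule shuffle_word_before_low[OF uP vP e])
    next
      case 2
      hence "before v (j - k) (i - k)" using v SF_before[OF hq] by blast
      thus ?thesis using shuffle_word_before_high[OF uP vP e] 2 by fastforce
    qed
  qed
  thus ?thesis unfolding SF_before[OF hc] using shuffle_word_perm[OF uP vP e] lc
    by (auto simp: perm_words_def)
qed

lemma low_part_S_F:
  assumes hp: "heap_forest ps" and hq: "heap_forest qs" and k: "k = length ps"
    and w: "w \<in> S_F (ps @ shift_parents k qs)"
  shows "low_part k w \<in> S_F ps"
proof -
  have hc: "heap_forest (ps @ shift_parents k qs)" using heap_forest_concat[OF hp hq] k by simp
  have lc: "length (ps @ shift_parents k qs) = k + length qs" using k by (simp add: shift_parents_def)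
  have wP: "w \<in> perm_words (k + length qs)" using S_F_perm_words[OF w] lc by simp
  have "before (low_part k w) j i" if r: "f_reach ps i j" for i j
  proof -
    have "f_reach (ps @ shift_parents k qs) i j" using r reach_concat[OF hp k] by blast
    hence "before w j i" using w SF_before[OF hc] by blast
    moreover have "i < k" "j < k" using f_reach_src[OF r] f_reach_dec[OF hp r] k by auto
    ultimately show ?thesis unfolding low_part_def by (intro before_filter_I)
  qed
  moreover have "distinct (low_part k w)" "set (low_part k w) = {0..<length ps}"
    using low_high_part_perm(1)[OF wP] k by (auto simp: perm_words_def)
  ultimately show ?thesis unfolding SF_before[OF hp] by blast
qed

lemma high_part_S_F:
  assumes hp: "heap_forest ps" and hq: "heap_forest qs" and k: "k = length ps"
    and w: "w \<in> S_F (ps @ shift_parents k qs)"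
  shows "high_part k w \<in> S_F qs"
proof -
  have hc: "heap_forest (ps @ shift_parents k qs)" using heap_forest_concat[OF hp hq] k by simp
  have lc: "length (ps @ shift_parents k qs) = k + length qs" using k by (simp add: shift_parents_def)
  have wP: "w \<in> perm_words (k + length qs)" using S_F_perm_words[OF w] lc by simp
  have "before (high_part k w) j i" if r: "f_reach qs i j" for i j
  proof -
    have "f_reach (ps @ shift_parents k qs) (i + k) (j + k)" using r reach_concat[OF hp k] by simp
    hence "before w (j + k) (i + k)" using w SF_before[OF hc] by blast
    thus ?thesis using before_high_part[of w k "j + k" "i + k"] wP by (simp add: perm_words_def)
  qed
  moreover have "distinct (high_part k w)" "set (high_part k w) = {0..<length qs}"
    using low_high_part_perm(2)[OF wP] by (auto simp: perm_words_def)
  ultimately show ?thesis unfolding SF_before[OF hq] by blast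
qed

lemma shuffle_word_bij:
  assumes hp: "heap_forest ps" and hq: "heap_forest qs" and k: "k = length ps" and k2: "k2 = length qs"
  shows "bij_betw (\<lambda>(u, v, e). shuffle_word k u v e) (S_F ps \<times> (S_F qs \<times> Sh k k2)) (S_F (ps @ shift_parents k qs))"
proof (rule bij_betw_imageI)
  show "inj_on (\<lambda>(u, v, e). shuffle_word k u v e) (S_F ps \<times> (S_F qs \<times> Sh k k2))"
  proof (rule inj_onI)
    fix x y assume x: "x \<in> S_F ps \<times> (S_F qs \<times> Sh k k2)" and y: "y \<in> S_F ps \<times> (S_F qs \<times> Sh k k2)"
      and eq: "(\<lambda>(u, v, e). shuffle_word k u v e) x = (\<lambda>(u, v, e). shuffle_word k u v e) y"
    obtain u v e where xe: "x = (u, v, e)" by (cases x) auto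
    obtain u' v' e' where ye: "y = (u', v', e')" by (cases y) auto
    have "u \<in> perm_words k" "v \<in> perm_words k2" "e \<in> Sh k k2"
      "u' \<in> perm_words k" "v' \<in> perm_words k2" "e' \<in> Sh k k2"
      using x y xe ye S_F_perm_words k k2 by auto
    moreover have "shuffle_word k u v e = shuffle_word k u' v' e'" using eq xe ye by simp
    ultimately show "x = y" using shuffle_word_inj xe ye by blast
  qed
  show "(\<lambda>(u, v, e). shuffle_word k u v e) ` (S_F ps \<times> (S_F qs \<times> Sh k k2)) = S_F (ps @ shift_parents k qs)"
  proof
    show "(\<lambda>(u, v, e). shuffle_word k u v e) ` (S_F ps \<times> (S_F qs \<times> Sh k k2)) \<subseteq> S_F (ps @ shift_parents k qs)"
      using shuffle_word_in[OF hp hq k k2] by auto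
    show "S_F (ps @ shift_parents k qs) \<subseteq> (\<lambda>(u, v, e). shuffle_word k u v e) ` (S_F ps \<times> (S_F qs \<times> Sh k k2))"
    proof
      fix w assume w: "w \<in> S_F (ps @ shift_parents k qs)"
      have "w \<in> perm_words (k + k2)" using S_F_perm_words[OF w] k k2 by (simp add: shift_parents_def)
      note split = shuffle_word_split[OF this]
      let ?e = "map (pos (concat_shift k (low_part k w) (high_part k w))) w"
      have "(low_part k w, high_part k w, ?e) \<in> S_F ps \<times> (S_F qs \<times> Sh k k2)"
        using low_part_S_F[OF hp hq k w] high_part_S_F[OF hp hq k w] split(1) by simp
      moreover have "w = (\<lambda>(u, v, e). shuffle_word k u v e) (low_part k w, high_part k w, ?e)"
        using split(2) by simp
      ultimately show "w \<in> (\<lambda>(u, v, e). shuffle_word k u v e) ` (S_F ps \<times> (S_F qs \<times> Sh k k2))"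
        by blast
    qed
  qed
qed

lemma theta_basis_mult:
  assumes hp: "heap_forest (fst F)" and hq: "heap_forest (fst G)"
  shows "theta_basis (hf_mult F G) c =
    (\<Sum>u\<in>S_F (fst F). \<Sum>v\<in>S_F (fst G). (fq_mult_basis (u, snd F) (v, snd G) c :: 'k::semiring_1))"
proof -
  let ?k = "length (fst F)" and ?k2 = "length (fst G)"
  let ?g = "\<lambda>w. if (w, snd F @ snd G) = c then (1::'k) else 0"
  have hm: "hf_mult F G = (fst F @ shift_parents ?k (fst G), snd F @ snd G)" by (simp add: hf_mult_def shift_parents_def)
  have "theta_basis (hf_mult F G) c = (\<Sum>w\<in>S_F (fst F @ shift_parents ?k (fst G)). ?g w)"
    unfolding hm theta_basis_def by simp
  also have "\<dots> = (\<Sum>x\<in>S_F (fst F) \<times> (S_F (fst G) \<times> Sh ?k ?k2). ?g ((\<lambda>(u, v, e). shuffle_word ?k u v e) x))"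
    by (rule sum.reindex_bij_betw[symmetric, OF shuffle_word_bij[OF hp hq refl refl]])
  also have "\<dots> = (\<Sum>(u, v, e)\<in>S_F (fst F) \<times> (S_F (fst G) \<times> Sh ?k ?k2). ?g (shuffle_word ?k u v e))"
    by (rule sum.cong[OF refl]) (simp only: split_def)
  also have "\<dots> = (\<Sum>u\<in>S_F (fst F). \<Sum>(v, e)\<in>S_F (fst G) \<times> Sh ?k ?k2. ?g (shuffle_word ?k u v e))"
    by (rule sum.cartesian_product[symmetric])
  also have "\<dots> = (\<Sum>u\<in>S_F (fst F). \<Sum>v\<in>S_F (fst G). \<Sum>e\<in>Sh ?k ?k2. ?g (shuffle_word ?k u v e))"
    by (rule sum.cong[OF refl], rule sum.cartesian_product[symmetric])
  also have "\<dots> = (\<Sum>u\<in>S_F (fst F). \<Sum>v\<in>S_F (fst G). fq_mult_basis (u, snd F) (v, snd G) c)"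
  proof (intro sum.cong refl)
    fix u v assume u: "u \<in> S_F (fst F)" and v: "v \<in> S_F (fst G)"
    have lu: "length u = ?k" and lv: "length v = ?k2" using S_F_length u v by auto
    show "(\<Sum>e\<in>Sh ?k ?k2. ?g (shuffle_word ?k u v e)) = fq_mult_basis (u, snd F) (v, snd G) c"
      unfolding fq_mult_basis_def fst_conv snd_conv lu lv by (simp add: shuffle_word_def concat_shift_def)
  qed
  finally show ?thesis .
qed

lemma Theta_H_mult_expand:
  assumes fx: "finite (supp x)" and fy: "finite (supp y)"
  shows "Theta (H_mult x y :: dforest \<Rightarrow> 'k::comm_semiring_1) c =
    (\<Sum>a\<in>supp x. \<Sum>b\<in>supp y. x a * y b * theta_basis (hf_mult a b) c)"
proof -
  have H: "H_mult x y = (\<lambda>F. \<Sum>ab\<in>supp x \<times> supp y. (x (fst ab) * y (snd ab)) * bvec (hf_mult (fst ab) (snd ab)) F)"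
    unfolding H_mult_def bilin_ext_def by (rule ext) (simp add: sum.cartesian_product split_def)
  have "Theta (H_mult x y) c = (\<Sum>ab\<in>supp x \<times> supp y. (x (fst ab) * y (snd ab)) * Theta (bvec (hf_mult (fst ab) (snd ab)) :: dforest \<Rightarrow> 'k) c)"
    unfolding H by (subst Theta_lincomb) (auto simp: fx fy supp_bvec)
  thus ?thesis by (simp add: Theta_bvec sum.cartesian_product split_def)
qed

lemma F_mult_Theta_expand:
  assumes fx: "finite (supp x)" and fy: "finite (supp y)"
  shows "F_mult (Theta x) (Theta y) c = (\<Sum>a\<in>supp x. \<Sum>b\<in>supp y. x a * y b *
    (\<Sum>u\<in>S_F (fst a). \<Sum>v\<in>S_F (fst b). (fq_mult_basis (u, snd a) (v, snd b) c :: 'k::comm_semiring_1)))"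
proof -
  let ?g = "\<lambda>p. lin_ext (fq_mult_basis p) (Theta y) :: dperm \<Rightarrow> 'k"
  have g: "\<And>p. ?g p c = (\<Sum>b\<in>supp y. y b * (\<Sum>v\<in>S_F (fst b). fq_mult_basis p (v, snd b) c))"
    unfolding Theta_as_lin by (subst lin_ext_comp) (auto simp: fy finite_supp_theta lin_ext_theta)
  have "F_mult (Theta x) (Theta y) c = lin_ext ?g (Theta x) c"
    unfolding F_mult_def by (rule bilin_as_lin)
  also have "\<dots> = (\<Sum>a\<in>supp x. x a * lin_ext ?g (theta_basis a) c)"
    unfolding Theta_as_lin[of x] by (rule lin_ext_comp) (auto simp: fx finite_supp_theta)
  also have "\<dots> = (\<Sum>a\<in>supp x. x a * (\<Sum>u\<in>S_F (fst a). \<Sum>b\<in>supp y. y b * (\<Sum>v\<in>S_F (fst b). fq_mult_basis (u, snd a) (v, snd b) c)))"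
    by (simp add: lin_ext_theta g)
  also have "\<dots> = (\<Sum>a\<in>supp x. \<Sum>b\<in>supp y. x a * y b *
      (\<Sum>u\<in>S_F (fst a). \<Sum>v\<in>S_F (fst b). fq_mult_basis (u, snd a) (v, snd b) c))"
    by (subst sum.swap) (simp add: sum_distrib_left mult.assoc)
  finally show ?thesis .
qed

lemma Theta_mult:
  assumes x: "x \<in> fvec (HF d)" and y: "y \<in> fvec (HF d)"
  shows "Theta (H_mult x y :: dforest \<Rightarrow> 'k::comm_semiring_1) = F_mult (Theta x) (Theta y)"
proof (rule ext)
  fix c
  have fx: "finite (supp x)" and fy: "finite (supp y)" using x y by (auto simp: fvec_def)
  have "theta_basis (hf_mult a b) c = (\<Sum>u\<in>S_F (fst a). \<Sum>v\<in>S_F (fst b). (fq_mult_basis (u, snd a) (v, snd b) c :: 'k))"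
    if "a \<in> supp x" "b \<in> supp y" for a b
  proof (rule theta_basis_mult)
    show "heap_forest (fst a)" "heap_forest (fst b)"
      using HF_heap_forest x y that unfolding fvec_def by blast+
  qed
  thus "Theta (H_mult x y) c = F_mult (Theta x) (Theta y) c"
    unfolding Theta_H_mult_expand[OF fx fy] F_mult_Theta_expand[OF fx fy] by simp
qed

section \<open>Induced subforests\<close>

definition rank :: "nat set \<Rightarrow> nat \<Rightarrow> nat" where
  "rank S x = card {s \<in> S. s < x}"

abbreviation sorted_elems :: "nat set \<Rightarrow> nat list" where "sorted_elems S \<equiv> sorted_list_of_set S"

abbreviation unrank :: "nat set \<Rightarrow> nat list \<Rightarrow> nat list" where
  "unrank S u \<equiv> map (\<lambda>i. sorted_elems S ! i) u"

lemma sorted_elems_facts: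
  assumes "finite S"
  shows "length (sorted_elems S) = card S" "distinct (sorted_elems S)" "set (sorted_elems S) = S" "sorted_wrt (<) (sorted_elems S)"
  using assms by auto

lemma sorted_elems_less_iff:
  assumes "finite S" "i < card S" "j < card S"
  shows "sorted_elems S ! i < sorted_elems S ! j \<longleftrightarrow> i < j"
proof -
  have s: "sorted_wrt (<) (sorted_elems S)" and l: "length (sorted_elems S) = card S" using sorted_elems_facts[OF assms(1)] by auto
  show ?thesis
  proof
    assume a: "sorted_elems S ! i < sorted_elems S ! j"
    show "i < j"
    proof (rule ccontr)
      assume "\<not> i < j"
      hence "j < i \<or> j = i" by auto
      thus False
      proof
        assume "j < i" hence "sorted_elems S ! j < sorted_elems S ! i" using sorted_wrt_nth_less[OF s] assms l by simp
        thus False using a by simp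
      next
        assume "j = i" thus False using a by simp
      qed
    qed
  next
    assume "i < j" thus "sorted_elems S ! i < sorted_elems S ! j" using sorted_wrt_nth_less[OF s] assms l by simp
  qed
qed

lemma rank_nth:
  assumes "finite S" "i < card S"
  shows "rank S (sorted_elems S ! i) = i"
proof -
  have l: "length (sorted_elems S) = card S" and st: "set (sorted_elems S) = S" using sorted_elems_facts[OF assms(1)] by auto
  have "{s \<in> S. s < sorted_elems S ! i} = (\<lambda>j. sorted_elems S ! j) ` {0..<i}"
  proof (rule set_eqI, rule iffI)
    fix s assume "s \<in> {s \<in> S. s < sorted_elems S ! i}"
    hence s: "s \<in> S" "s < sorted_elems S ! i" by auto
    then obtain j where j: "j < card S" "sorted_elems S ! j = s" using st l by (metis in_set_conv_nth)
    have "j < i" using sorted_elems_less_iff[OF assms(1) j(1) assms(2)] j s by simp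
    thus "s \<in> (\<lambda>j. sorted_elems S ! j) ` {0..<i}" using j by auto
  next
    fix s assume "s \<in> (\<lambda>j. sorted_elems S ! j) ` {0..<i}"
    then obtain j where j: "j < i" "s = sorted_elems S ! j" by auto
    have "j < card S" using j assms by simp
    hence "s \<in> S" using j st l by (metis nth_mem)
    moreover have "s < sorted_elems S ! i" using sorted_elems_less_iff[OF assms(1) \<open>j < card S\<close> assms(2)] j by simp
    ultimately show "s \<in> {s \<in> S. s < sorted_elems S ! i}" by simp
  qed
  moreover have "inj_on (\<lambda>j. sorted_elems S ! j) {0..<i}"
    using sorted_elems_facts[OF assms(1)] assms(2) by (intro inj_on_nth) auto
  ultimately show ?thesis unfolding rank_def by (simp add: card_image)
qed

lemma rank_in:
  assumes "finite S" "x \<in> S"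
  shows "rank S x < card S \<and> sorted_elems S ! rank S x = x"
proof -
  have l: "length (sorted_elems S) = card S" and st: "set (sorted_elems S) = S" using sorted_elems_facts[OF assms(1)] by auto
  obtain i where i: "i < card S" "sorted_elems S ! i = x" using assms(2) st l by (metis in_set_conv_nth)
  thus ?thesis using rank_nth[OF assms(1) i(1)] by simp
qed

lemma sorted_elems_nth_in: "finite S \<Longrightarrow> i < card S \<Longrightarrow> sorted_elems S ! i \<in> S"
proof -
  assume "finite S" "i < card S"
  hence "i < length (sorted_elems S)" by simp
  hence "sorted_elems S ! i \<in> set (sorted_elems S)" by (rule nth_mem)
  thus ?thesis using \<open>finite S\<close> by simp
qed

lemma map_sorted_elems_rank: "finite S \<Longrightarrow> set xs \<subseteq> S \<Longrightarrow> map (\<lambda>i. sorted_elems S ! i) (map (rank S) xs) = xs"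
  by (induct xs) (auto simp: rank_in)

lemma map_rank_sorted_elems: "finite S \<Longrightarrow> set u \<subseteq> {0..<card S} \<Longrightarrow> map (rank S) (unrank S u) = u"
  by (induct u) (auto simp: rank_nth)

lemma unrank_perm:
  assumes "finite S" "u \<in> perm_words (card S)"
  shows "distinct (unrank S u) \<and> set (unrank S u) = S"
proof -
  have l: "length (sorted_elems S) = card S" and st: "set (sorted_elems S) = S" and d: "distinct (sorted_elems S)" using assms(1) by auto
  have du: "distinct u" and su: "set u = {0..<card S}" using assms(2) by (auto simp: perm_words_def)
  have inj: "inj_on (\<lambda>i. sorted_elems S ! i) (set u)" using d l su by (intro inj_on_nth) auto
  have "set (unrank S u) = (\<lambda>i. sorted_elems S ! i) ` {0..<length (sorted_elems S)}" using su l by simp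
  also have "\<dots> = set (map (\<lambda>i. sorted_elems S ! i) [0..<length (sorted_elems S)])" by simp
  also have "\<dots> = set (sorted_elems S)" by (simp only: map_nth)
  also have "\<dots> = S" using st .
  finally show ?thesis using du inj by (simp add: distinct_map)
qed

lemma piece_unrank:
  assumes fS: "finite S" and uP: "u \<in> perm_words (card S)"
  shows "piece (unrank S u) l = (u, map (\<lambda>i. l ! i) (sorted_elems S))"
proof -
  have A: "set (unrank S u) = S" using unrank_perm[OF fS uP] by auto
  have su: "set u \<subseteq> {0..<card S}" using uP by (auto simp: perm_words_def)
  have "std (unrank S u) = map (rank S) (unrank S u)"
    unfolding std_def A rank_def ..
  also have "\<dots> = u" by (rule map_rank_sorted_elems[OF fS su])
  finally show ?thesis unfolding piece_def A by simp
qed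

definition restrict_parents :: "nat option list \<Rightarrow> nat set \<Rightarrow> nat option list" where
  "restrict_parents ps S = map (\<lambda>i. case ps ! i of None \<Rightarrow> None
                  | Some j \<Rightarrow> (if j \<in> S then Some (rank S j) else None)) (sorted_elems S)"

lemma restrict_parents_length: "finite S \<Longrightarrow> length (restrict_parents ps S) = card S"
  by (simp add: restrict_parents_def)

lemma sub_forest_eq: "sub_forest F S = (restrict_parents (fst F) S, map (\<lambda>i. snd F ! i) (sorted_elems S))"
  unfolding sub_forest_def restrict_parents_def rank_def Let_def by simp

lemma restrict_parents_edges:
  assumes "finite S"
  shows "(a, b) \<in> f_edges (restrict_parents ps S) \<longleftrightarrow> a < card S \<and> b < card S \<and> ps ! (sorted_elems S ! a) = Some (sorted_elems S ! b)"
proof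
  assume "(a, b) \<in> f_edges (restrict_parents ps S)"
  hence a: "a < card S" and e: "restrict_parents ps S ! a = Some b" by (auto simp: f_edges_def restrict_parents_length[OF assms])
  have l: "length (sorted_elems S) = card S" using assms by simp
  from e a l obtain j where j: "ps ! (sorted_elems S ! a) = Some j" "j \<in> S" "b = rank S j"
    by (auto simp: restrict_parents_def split: option.splits if_splits)
  thus "a < card S \<and> b < card S \<and> ps ! (sorted_elems S ! a) = Some (sorted_elems S ! b)" using rank_in[OF assms j(2)] a by simp
next
  assume h: "a < card S \<and> b < card S \<and> ps ! (sorted_elems S ! a) = Some (sorted_elems S ! b)"
  have l: "length (sorted_elems S) = card S" and st: "set (sorted_elems S) = S" using assms by auto
  have "sorted_elems S ! b \<in> S" using h l st by (metis nth_mem)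
  hence "restrict_parents ps S ! a = Some b" using h l rank_nth[OF assms] by (simp add: restrict_parents_def)
  thus "(a, b) \<in> f_edges (restrict_parents ps S)" using h by (simp add: f_edges_def restrict_parents_length[OF assms])
qed

text \<open>On such a set, reachability in the induced subforest is the restriction of
  reachability in the forest.\<close>
definition path_convex :: "nat option list \<Rightarrow> nat set \<Rightarrow> bool" where
  "path_convex ps S = (\<forall>x y z. x \<in> S \<longrightarrow> z \<in> S \<longrightarrow> f_reach ps x y \<longrightarrow> f_reach ps y z \<longrightarrow> y \<in> S)"

lemma reach_sub_D:
  assumes fin: "finite S" and Sn: "S \<subseteq> {0..<length ps}"
    and "f_reach (restrict_parents ps S) a b"
  shows "a < card S \<and> b < card S \<and> f_reach ps (sorted_elems S ! a) (sorted_elems S ! b)"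
proof -
  have l: "length (sorted_elems S) = card S" and st: "set (sorted_elems S) = S" using fin by auto
  have inS: "\<And>i. i < card S \<Longrightarrow> sorted_elems S ! i \<in> S" using l st by (metis nth_mem)
  from assms(3) show "a < card S \<and> b < card S \<and> f_reach ps (sorted_elems S ! a) (sorted_elems S ! b)"
    unfolding f_reach_def
  proof (induct rule: trancl_induct)
    case (base y)
    hence h: "a < card S" "y < card S" "ps ! (sorted_elems S ! a) = Some (sorted_elems S ! y)" using restrict_parents_edges[OF fin] by auto
    have "sorted_elems S ! a < length ps" using inS[OF h(1)] Sn by auto
    hence "(sorted_elems S ! a, sorted_elems S ! y) \<in> f_edges ps" using h by (simp add: f_edges_def)
    thus ?case using h by auto
  next
    case (step y z)
    hence h: "y < card S" "z < card S" "ps ! (sorted_elems S ! y) = Some (sorted_elems S ! z)" using restrict_parents_edges[OF fin] by auto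
    have "sorted_elems S ! y < length ps" using inS[OF h(1)] Sn by auto
    hence "(sorted_elems S ! y, sorted_elems S ! z) \<in> f_edges ps" using h by (simp add: f_edges_def)
    thus ?case using step(3) h by (auto intro: trancl_into_trancl)
  qed
qed

lemma reach_sub_I:
  assumes fin: "finite S" and convex: "path_convex ps S"
    and h: "a < card S \<and> b < card S \<and> f_reach ps (sorted_elems S ! a) (sorted_elems S ! b)"
  shows "f_reach (restrict_parents ps S) a b"
proof -
  have l: "length (sorted_elems S) = card S" and st: "set (sorted_elems S) = S" using fin by auto
  have inS: "\<And>i. i < card S \<Longrightarrow> sorted_elems S ! i \<in> S" using l st by (metis nth_mem)
  define x where "x = sorted_elems S ! a"
  have xS: "x \<in> S" using inS h by (simp add: x_def)
  have lift_path: "\<And>z. (x, z) \<in> (f_edges ps)\<^sup>+ \<Longrightarrow> z \<in> S \<Longrightarrow> (rank S x, rank S z) \<in> (f_edges (restrict_parents ps S))\<^sup>+"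
  proof -
    fix z assume "(x, z) \<in> (f_edges ps)\<^sup>+"
    thus "z \<in> S \<Longrightarrow> (rank S x, rank S z) \<in> (f_edges (restrict_parents ps S))\<^sup>+"
    proof (induct rule: trancl_induct)
      case (base y)
      have ry: "rank S y < card S" "sorted_elems S ! rank S y = y" using rank_in[OF fin base(2)] by auto
      have rx: "rank S x < card S" "sorted_elems S ! rank S x = x" using rank_in[OF fin xS] by auto
      have "ps ! x = Some y" using base(1) by (simp add: f_edges_def)
      hence "(rank S x, rank S y) \<in> f_edges (restrict_parents ps S)" using restrict_parents_edges[OF fin] rx ry by simp
      thus ?case by (rule r_into_trancl)
    next
      case (step y z)
      have yS: "y \<in> S"
        using convex[unfolded path_convex_def] xS step(1,2,4) unfolding f_reach_def by blast
      have ry: "rank S y < card S" "sorted_elems S ! rank S y = y" using rank_in[OF fin yS] by auto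
      have rz: "rank S z < card S" "sorted_elems S ! rank S z = z" using rank_in[OF fin step(4)] by auto
      have "ps ! y = Some z" using step(2) by (simp add: f_edges_def)
      hence "(rank S y, rank S z) \<in> f_edges (restrict_parents ps S)" using restrict_parents_edges[OF fin] ry rz by simp
      thus ?case using step(3)[OF yS] by (rule trancl_into_trancl[rotated])
    qed
  qed
  have "(rank S x, rank S (sorted_elems S ! b)) \<in> (f_edges (restrict_parents ps S))\<^sup>+"
    using lift_path h inS unfolding x_def f_reach_def by blast
  thus "f_reach (restrict_parents ps S) a b" using rank_nth[OF fin] h unfolding x_def f_reach_def by simp
qed

lemma reach_sub:
  assumes fin: "finite S" and Sn: "S \<subseteq> {0..<length ps}" and convex: "path_convex ps S"
  shows "f_reach (restrict_parents ps S) a b \<longleftrightarrow> a < card S \<and> b < card S \<and> f_reach ps (sorted_elems S ! a) (sorted_elems S ! b)"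
  using reach_sub_D[OF fin Sn] reach_sub_I[OF fin convex] by blast

lemma restrict_parents_heap:
  assumes fin: "finite S" and hp: "heap_forest ps" and Sn: "S \<subseteq> {0..<length ps}"
  shows "heap_forest (restrict_parents ps S)"
  unfolding heap_forest_def
proof (intro allI impI)
  fix a b assume a: "a < length (restrict_parents ps S)" "restrict_parents ps S ! a = Some b"
  hence "(a, b) \<in> f_edges (restrict_parents ps S)" by (simp add: f_edges_def)
  hence h: "a < card S" "b < card S" "ps ! (sorted_elems S ! a) = Some (sorted_elems S ! b)" using restrict_parents_edges[OF fin] by auto
  have "sorted_elems S ! a \<in> S" using h fin by (metis nth_mem length_sorted_list_of_set set_sorted_list_of_set)
  hence "sorted_elems S ! a < length ps" using Sn by auto
  hence "sorted_elems S ! b < sorted_elems S ! a" using hp h by (simp add: heap_forest_def)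
  thus "b < a" using sorted_elems_less_iff[OF fin h(2) h(1)] by simp
qed

lemma S_F_restrict_perm_words: "finite S \<Longrightarrow> u \<in> S_F (restrict_parents ps S) \<Longrightarrow> u \<in> perm_words (card S)"
  using S_F_perm_words restrict_parents_length by metis

lemma rank_word_S_F:
  assumes fin: "finite S" and Sn: "S \<subseteq> {0..<length ps}" and hp: "heap_forest ps"
    and conv: "path_convex ps S" and d: "distinct w" and s: "set w = S"
  shows "map (rank S) w \<in> S_F (restrict_parents ps S) \<longleftrightarrow> (\<forall>i\<in>S. \<forall>j\<in>S. f_reach ps i j \<longrightarrow> before w j i)"
proof -
  have hR: "heap_forest (restrict_parents ps S)" by (rule restrict_parents_heap[OF fin hp Sn])
  have inj: "inj_on (rank S) S" by (rule inj_onI) (metis rank_in[OF fin])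
  have img: "rank S ` S = {0..<card S}"
    using rank_in[OF fin] rank_nth[OF fin] sorted_elems_nth_in[OF fin] by (force simp: image_iff)
  have bef: "before (map (rank S) w) (rank S j) (rank S i) \<longleftrightarrow> before w j i" if "i \<in> S" "j \<in> S" for i j
    using before_map_I[of w j i "rank S"] before_map_D[of "rank S" w j i] inj s that by blast
  have basics: "distinct (map (rank S) w)" "set (map (rank S) w) = {0..<length (restrict_parents ps S)}"
    using d s inj img restrict_parents_length[OF fin] by (auto simp: distinct_map)
  have reach: "f_reach (restrict_parents ps S) (rank S i) (rank S j) \<longleftrightarrow> f_reach ps i j"
    if "i \<in> S" "j \<in> S" for i j
    using reach_sub[OF fin Sn conv] rank_in[OF fin] that by auto
  have "(\<forall>a b. f_reach (restrict_parents ps S) a b \<longrightarrow> before (map (rank S) w) b a)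
      \<longleftrightarrow> (\<forall>i\<in>S. \<forall>j\<in>S. f_reach ps i j \<longrightarrow> before w j i)"
  proof
    assume h: "\<forall>a b. f_reach (restrict_parents ps S) a b \<longrightarrow> before (map (rank S) w) b a"
    show "\<forall>i\<in>S. \<forall>j\<in>S. f_reach ps i j \<longrightarrow> before w j i" using h reach bef by blast
  next
    assume h: "\<forall>i\<in>S. \<forall>j\<in>S. f_reach ps i j \<longrightarrow> before w j i"
    show "\<forall>a b. f_reach (restrict_parents ps S) a b \<longrightarrow> before (map (rank S) w) b a"
    proof (intro allI impI)
      fix a b assume r: "f_reach (restrict_parents ps S) a b"
      hence ab: "a < card S" "b < card S" using reach_sub[OF fin Sn conv] by auto
      hence inS: "sorted_elems S ! a \<in> S" "sorted_elems S ! b \<in> S" using sorted_elems_nth_in[OF fin] by auto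
      have "f_reach ps (sorted_elems S ! a) (sorted_elems S ! b)" using r reach_sub[OF fin Sn conv] by auto
      hence "before w (sorted_elems S ! b) (sorted_elems S ! a)" using h inS by blast
      thus "before (map (rank S) w) b a" using bef[OF inS] rank_nth[OF fin] ab by simp
    qed
  qed
  thus ?thesis unfolding SF_before[OF hR] using basics by blast
qed

lemma unrank_word_before:
  assumes fin: "finite S" and Sn: "S \<subseteq> {0..<length ps}" and hp: "heap_forest ps"
    and conv: "path_convex ps S" and u: "u \<in> S_F (restrict_parents ps S)"
    and ij: "i \<in> S" "j \<in> S" "f_reach ps i j"
  shows "before (unrank S u) j i"
proof -
  have uP: "u \<in> perm_words (card S)" by (rule S_F_restrict_perm_words[OF fin u])
  have "map (rank S) (unrank S u) = u"
    by (rule map_rank_sorted_elems[OF fin]) (use uP in \<open>auto simp: perm_words_def\<close>)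
  thus ?thesis using rank_word_S_F[OF fin Sn hp conv, of "unrank S u"] unrank_perm[OF fin uP] u ij by auto
qed

section \<open>Admissible cuts\<close>

abbreviation leaf_part :: "nat option list \<Rightarrow> nat set \<Rightarrow> nat set" where
  "leaf_part ps V \<equiv> lea_set ps V"

abbreviation root_part :: "nat option list \<Rightarrow> nat set \<Rightarrow> nat set" where
  "root_part ps V \<equiv> {0..<length ps} - lea_set ps V"

lemma leaf_part_sub: "V \<in> admissible_cuts ps \<Longrightarrow> leaf_part ps V \<subseteq> {0..<length ps}"
  by (auto simp: admissible_cuts_def lea_set_def)

lemma finite_cuts: "finite (admissible_cuts ps)"
proof -
  have "admissible_cuts ps \<subseteq> Pow {0..<length ps}" by (auto simp: admissible_cuts_def)
  thus ?thesis by (rule finite_subset) simp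
qed

lemma leaf_part_backward:
  assumes "f_reach ps y z" "z \<in> leaf_part ps V"
  shows "y \<in> leaf_part ps V"
proof -
  have yn: "y < length ps" using f_reach_src[OF assms(1)] .
  from assms(2) have "z \<in> V \<or> (\<exists>v\<in>V. f_reach ps z v)" by (auto simp: lea_set_def)
  thus ?thesis
  proof
    assume "z \<in> V" thus ?thesis using assms(1) yn by (auto simp: lea_set_def)
  next
    assume "\<exists>v\<in>V. f_reach ps z v"
    then obtain v where "v \<in> V" "f_reach ps z v" by blast
    hence "f_reach ps y v" using f_reach_trans assms(1) by blast
    thus ?thesis using \<open>v \<in> V\<close> yn by (auto simp: lea_set_def)
  qed
qed

lemma root_part_forward:
  assumes hp: "heap_forest ps" and x: "x \<in> root_part ps V" and r: "f_reach ps x y"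
  shows "y \<in> root_part ps V"
proof -
  have "y < x" using f_reach_dec[OF hp r] .
  moreover have "y \<notin> leaf_part ps V" using leaf_part_backward[OF r] x by blast
  ultimately show ?thesis using x by auto
qed

lemma leaf_part_convex: "path_convex ps (leaf_part ps V)"
  unfolding path_convex_def using leaf_part_backward by blast

lemma root_part_convex: "heap_forest ps \<Longrightarrow> path_convex ps (root_part ps V)"
  unfolding path_convex_def using root_part_forward by blast

lemma cut_recover:
  assumes V: "V \<in> admissible_cuts ps"
  shows "V = {x \<in> leaf_part ps V. \<forall>y\<in>leaf_part ps V. \<not> f_reach ps x y}"
proof (rule set_eqI, rule iffI)
  fix x assume x: "x \<in> V"
  have ac: "\<forall>v\<in>V. \<forall>w\<in>V. \<not> f_reach ps v w" using V by (simp add: admissible_cuts_def)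
  have "\<forall>y\<in>leaf_part ps V. \<not> f_reach ps x y"
  proof
    fix y assume y: "y \<in> leaf_part ps V"
    show "\<not> f_reach ps x y"
    proof
      assume r: "f_reach ps x y"
      from y have "y \<in> V \<or> (\<exists>v\<in>V. f_reach ps y v)" by (auto simp: lea_set_def)
      thus False
      proof
        assume "y \<in> V" thus False using ac x r by blast
      next
        assume "\<exists>v\<in>V. f_reach ps y v"
        then obtain v where "v \<in> V" "f_reach ps y v" by blast
        thus False using ac x r f_reach_trans by blast
      qed
    qed
  qed
  thus "x \<in> {x \<in> leaf_part ps V. \<forall>y\<in>leaf_part ps V. \<not> f_reach ps x y}" using x by (auto simp: lea_set_def)
next
  fix x assume x: "x \<in> {x \<in> leaf_part ps V. \<forall>y\<in>leaf_part ps V. \<not> f_reach ps x y}"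
  show "x \<in> V"
  proof (rule ccontr)
    assume "x \<notin> V"
    then obtain v where "v \<in> V" "f_reach ps x v" using x by (auto simp: lea_set_def)
    moreover have "v \<in> leaf_part ps V" using \<open>v \<in> V\<close> by (simp add: lea_set_def)
    ultimately show False using x by blast
  qed
qed

definition cut_of :: "nat option list \<Rightarrow> nat set \<Rightarrow> nat set" where
  "cut_of ps L = {x \<in> L. \<forall>y\<in>L. \<not> f_reach ps x y}"

lemma cut_of_admissible:
  assumes "L \<subseteq> {0..<length ps}"
  shows "cut_of ps L \<in> admissible_cuts ps"
  using assms by (auto simp: cut_of_def admissible_cuts_def)

text \<open>Every vertex of a finite vertex set L that reaches another member of L reaches one
  with no successor in L, for instance the smallest member it reaches.\<close>
lemma reach_cut_of:
  assumes hp: "heap_forest ps" and Ln: "L \<subseteq> {0..<length ps}" and y: "y \<in> L" "f_reach ps x y"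
  shows "\<exists>v\<in>cut_of ps L. f_reach ps x v"
proof -
  let ?Y = "{y \<in> L. f_reach ps x y}"
  have fY: "finite ?Y" using Ln by (auto intro: finite_subset[of _ "{0..<length ps}"])
  have y0: "Min ?Y \<in> ?Y" using Min_in[OF fY] y by blast
  have "\<not> f_reach ps (Min ?Y) z" if z: "z \<in> L" for z
  proof
    assume r: "f_reach ps (Min ?Y) z"
    hence "z \<in> ?Y" using y0 z f_reach_trans by blast
    hence "Min ?Y \<le> z" using Min_le[OF fY] by blast
    thus False using f_reach_dec[OF hp r] by simp
  qed
  thus ?thesis using y0 by (auto simp: cut_of_def)
qed

lemma lea_set_cut_of:
  assumes hp: "heap_forest ps" and Ln: "L \<subseteq> {0..<length ps}"
    and bk: "\<And>y z. f_reach ps y z \<Longrightarrow> z \<in> L \<Longrightarrow> y \<in> L"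
  shows "lea_set ps (cut_of ps L) = L"
proof (rule set_eqI, rule iffI)
  fix x assume "x \<in> lea_set ps (cut_of ps L)"
  thus "x \<in> L" using bk by (auto simp: lea_set_def cut_of_def)
next
  fix x assume x: "x \<in> L"
  show "x \<in> lea_set ps (cut_of ps L)"
  proof (cases "\<exists>y\<in>L. f_reach ps x y")
    case True
    thus ?thesis using reach_cut_of[OF hp Ln] x Ln by (force simp: lea_set_def)
  next
    case False
    thus ?thesis using x by (auto simp: cut_of_def lea_set_def)
  qed
qed

lemma pos_take:
  assumes "distinct w" "x \<in> set w"
  shows "x \<in> set (take k w) \<longleftrightarrow> pos w x < k"
proof -
  have p: "pos w x < length w" "w ! pos w x = x" using pos_prop[OF assms] by auto
  show ?thesis
  proof
    assume "x \<in> set (take k w)"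
    then obtain i where i: "i < length (take k w)" "take k w ! i = x" by (auto simp: in_set_conv_nth)
    hence "w ! i = x" "i < length w" "i < k" by auto
    hence "pos w x = i" using pos_nth[OF assms(1)] by blast
    thus "pos w x < k" using \<open>i < k\<close> by simp
  next
    assume "pos w x < k"
    hence "take k w ! pos w x = x" "pos w x < length (take k w)" using p by auto
    thus "x \<in> set (take k w)" by (metis nth_mem)
  qed
qed

lemma take_drop_disj: "distinct w \<Longrightarrow> set (take k w) \<inter> set (drop k w) = {}"
  by (metis append_take_drop_id distinct_append)

lemma drop_back:
  assumes d: "distinct w" and b: "before w a b" and a: "a \<in> set (drop k w)"
  shows "b \<in> set (drop k w)"
proof -
  have ab: "a \<in> set w" "b \<in> set w" "pos w a < pos w b" using before_pos[OF d] b by auto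
  have "\<not> pos w a < k" using pos_take[OF d ab(1)] a take_drop_disj[OF d] by blast
  hence "\<not> pos w b < k" using ab by simp
  hence "b \<notin> set (take k w)" using pos_take[OF d ab(2)] by simp
  moreover have "b \<in> set (take k w) \<union> set (drop k w)" using ab(2) by (metis append_take_drop_id set_append)
  ultimately show ?thesis by blast
qed

section \<open>Theta is comultiplicative\<close>

text \<open>Pairs (w, k) of a linear extension w of F and a split point k correspond bijectively
  to triples (V, u, v) of an admissible cut V and linear extensions u, v of its root and leaf
  parts; the first k letters of w are the root part, the rest is the leaf part.\<close>

definition cut_word :: "nat option list \<Rightarrow> nat set \<times> nat list \<times> nat list \<Rightarrow> nat list \<times> nat" where
  "cut_word ps x = (case x of (V, u, v) \<Rightarrow>
     (unrank (root_part ps V) u @ unrank (leaf_part ps V) v, card (root_part ps V)))"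

definition cut_data :: "nat option list \<Rightarrow> (nat set \<times> nat list \<times> nat list) set" where
  "cut_data ps = Sigma (admissible_cuts ps) (\<lambda>V. S_F (restrict_parents ps (root_part ps V)) \<times> S_F (restrict_parents ps (leaf_part ps V)))"

text \<open>Every split point k of a linear extension w comes from an admissible cut: the last
  n - k letters of w form the leaf part of the cut consisting of their path-maximal elements.\<close>
lemma split_cut:
  assumes hp: "heap_forest ps" and w: "w \<in> S_F ps"
  shows "\<exists>V\<in>admissible_cuts ps. leaf_part ps V = set (drop k w) \<and> root_part ps V = set (take k w)"
proof -
  have dw: "distinct w" and sw: "set w = {0..<length ps}"
    using S_F_perm_words[OF w] by (auto simp: perm_words_def)
  define L where "L = set (drop k w)"
  have Ln: "L \<subseteq> {0..<length ps}" using sw set_drop_subset[of k w] by (simp add: L_def)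
  have closed: "y \<in> L" if r: "f_reach ps y z" and z: "z \<in> L" for y z
  proof -
    have "before w z y" using w SF_before[OF hp] r by blast
    from drop_back[OF dw this] z show "y \<in> L" by (simp add: L_def)
  qed
  have lea: "leaf_part ps (cut_of ps L) = L" by (rule lea_set_cut_of[OF hp Ln closed])
  have "set (take k w) \<union> set (drop k w) = {0..<length ps}"
    using sw by (metis append_take_drop_id set_append)
  hence "root_part ps (cut_of ps L) = set (take k w)"
    using lea take_drop_disj[OF dw] by (auto simp: L_def)
  thus ?thesis using lea cut_of_admissible[OF Ln] by (auto simp: L_def)
qed

lemma cut_word_in:
  assumes hp: "heap_forest ps" and V: "V \<in> admissible_cuts ps"
    and u: "u \<in> S_F (restrict_parents ps (root_part ps V))" and v: "v \<in> S_F (restrict_parents ps (leaf_part ps V))"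
  shows "unrank (root_part ps V) u @ unrank (leaf_part ps V) v \<in> S_F ps"
proof -
  let ?R = "root_part ps V" and ?L = "leaf_part ps V"
  let ?A = "unrank ?R u" and ?B = "unrank ?L v"
  have Ln: "?L \<subseteq> {0..<length ps}" by (rule leaf_part_sub[OF V])
  have fR: "finite ?R" and fL: "finite ?L" using Ln finite_subset by auto
  have A: "distinct ?A" "set ?A = ?R" using unrank_perm[OF fR S_F_restrict_perm_words[OF fR u]] by auto
  have B: "distinct ?B" "set ?B = ?L" using unrank_perm[OF fL S_F_restrict_perm_words[OF fL v]] by auto
  show ?thesis unfolding SF_before[OF hp]
  proof (intro conjI allI impI)
    show "distinct (?A @ ?B)" using A B by auto
    show "set (?A @ ?B) = {0..<length ps}" using A B Ln by auto
    fix i j assume r: "f_reach ps i j"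
    have i: "i < length ps" using f_reach_src[OF r] .
    have j: "j < i" using f_reach_dec[OF hp r] .
    show "before (?A @ ?B) j i"
    proof (cases "i \<in> ?L")
      case iL: True
      show ?thesis
      proof (cases "j \<in> ?L")
        case True
        have "before ?B j i" by (rule unrank_word_before[OF fL Ln hp leaf_part_convex v iL True r])
        thus ?thesis by (rule before_append_R)
      next
        case False
        hence "j \<in> ?R" using j i by auto
        thus ?thesis using A B iL by (intro before_cross) auto
      qed
    next
      case False
      hence iR: "i \<in> ?R" using i by auto
      have jR: "j \<in> ?R" by (rule root_part_forward[OF hp iR r])
      have "before ?A j i" by (rule unrank_word_before[OF fR _ hp root_part_convex[OF hp] u iR jR r]) auto
      thus ?thesis by (rule before_append_L)
    qed
  qed
qed

text \<open>Injectivity: the split point and the leaf part determine the cut, and the words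
  determine the linear extensions u and v.\<close>
lemma cut_word_inj:
  assumes hp: "heap_forest ps"
  shows "inj_on (cut_word ps) (cut_data ps)"
proof (rule inj_onI)
  fix x y assume x: "x \<in> cut_data ps" and y: "y \<in> cut_data ps" and e: "cut_word ps x = cut_word ps y"
  obtain V u v where xe: "x = (V, u, v)" by (cases x) auto
  obtain V' u' v' where ye: "y = (V', u', v')" by (cases y) auto
  have V: "V \<in> admissible_cuts ps" and u: "u \<in> S_F (restrict_parents ps (root_part ps V))" and v: "v \<in> S_F (restrict_parents ps (leaf_part ps V))"
    using x xe by (auto simp: cut_data_def)
  have V': "V' \<in> admissible_cuts ps" and u': "u' \<in> S_F (restrict_parents ps (root_part ps V'))" and v': "v' \<in> S_F (restrict_parents ps (leaf_part ps V'))"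
    using y ye by (auto simp: cut_data_def)
  let ?R = "root_part ps V" and ?L = "leaf_part ps V" and ?R' = "root_part ps V'" and ?L' = "leaf_part ps V'"
  have Ln: "?L \<subseteq> {0..<length ps}" "?L' \<subseteq> {0..<length ps}" using leaf_part_sub V V' by auto
  have fR: "finite ?R" "finite ?R'" and fL: "finite ?L" "finite ?L'" using Ln finite_subset by auto
  have uP: "u \<in> perm_words (card ?R)" "u' \<in> perm_words (card ?R')" using S_F_restrict_perm_words fR u u' by auto
  have vP: "v \<in> perm_words (card ?L)" "v' \<in> perm_words (card ?L')" using S_F_restrict_perm_words fL v v' by auto
  let ?A = "unrank ?R u" and ?B = "unrank ?L v"
  let ?A' = "unrank ?R' u'" and ?B' = "unrank ?L' v'"
  have eq: "?A @ ?B = ?A' @ ?B'" and c: "card ?R = card ?R'" using e xe ye by (auto simp: cut_word_def)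
  have lA: "length ?A = card ?R" "length ?A' = card ?R'" using uP perm_words_length by auto
  have "?A = ?A' \<and> ?B = ?B'" using eq lA c by (subst (asm) append_eq_append_conv) auto
  hence AA: "?A = ?A'" by simp
  have BB: "?B = ?B'" using eq AA by simp
  have "?R = ?R'" using AA unrank_perm[OF fR(1) uP(1)] unrank_perm[OF fR(2) uP(2)] by simp
  hence LL: "?L = ?L'" using Ln by blast
  have VV: "V = V'" using cut_recover[OF V] cut_recover[OF V'] LL by simp
  have "u = u'"
  proof -
    have inj: "inj_on (\<lambda>i. sorted_elems ?R ! i) (set u \<union> set u')" using uP fR VV
      by (intro inj_on_nth) (auto simp: perm_words_def)
    show ?thesis using AA VV inj_on_map_eq_map[OF inj] by simp
  qed
  moreover have "v = v'"
  proof -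
    have inj: "inj_on (\<lambda>i. sorted_elems ?L ! i) (set v \<union> set v')" using vP fL VV
      by (intro inj_on_nth) (auto simp: perm_words_def)
    show ?thesis using BB VV inj_on_map_eq_map[OF inj] by simp
  qed
  ultimately show "x = y" using xe ye VV by simp
qed

lemma cut_word_surj:
  assumes hp: "heap_forest ps" and w: "w \<in> S_F ps" and k: "k \<le> length ps"
  shows "(w, k) \<in> cut_word ps ` cut_data ps"
proof -
  have dw: "distinct w" and lw: "length w = length ps"
    using S_F_perm_words[OF w] perm_words_length by (auto simp: perm_words_def)
  have wB: "\<forall>i j. f_reach ps i j \<longrightarrow> before w j i" using w SF_before[OF hp] by blast
  have dtd: "distinct (take k w @ drop k w)" using dw by simp
  obtain V where V: "V \<in> admissible_cuts ps"
    and L: "leaf_part ps V = set (drop k w)" and R: "root_part ps V = set (take k w)"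
    using split_cut[OF hp w] by blast
  let ?R = "root_part ps V" and ?L = "leaf_part ps V"
  have Ln: "?L \<subseteq> {0..<length ps}" by (rule leaf_part_sub[OF V])
  have fR: "finite ?R" and fL: "finite ?L" using Ln finite_subset by auto
  have Rn: "?R \<subseteq> {0..<length ps}" by auto
  have dtake: "distinct (take k w)" "distinct (drop k w)" using dw by auto
  have "\<forall>i\<in>?R. \<forall>j\<in>?R. f_reach ps i j \<longrightarrow> before (take k w) j i"
    using wB before_append_D(1)[OF dtd] R by auto
  hence "map (rank ?R) (take k w) \<in> S_F (restrict_parents ps ?R)"
    using rank_word_S_F[OF fR Rn hp root_part_convex[OF hp] dtake(1) R[symmetric]] by blast
  moreover have "\<forall>i\<in>?L. \<forall>j\<in>?L. f_reach ps i j \<longrightarrow> before (drop k w) j i"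
    using wB before_append_D(2)[OF dtd] L by auto
  hence "map (rank ?L) (drop k w) \<in> S_F (restrict_parents ps ?L)"
    using rank_word_S_F[OF fL Ln hp leaf_part_convex dtake(2) L[symmetric]] by blast
  moreover have "cut_word ps (V, map (rank ?R) (take k w), map (rank ?L) (drop k w)) = (w, k)"
  proof -
    have "card ?R = k" using R distinct_card[of "take k w"] dw k lw by simp
    moreover have "unrank ?R (map (rank ?R) (take k w)) = take k w"
      by (rule map_sorted_elems_rank[OF fR]) (use R in simp)
    moreover have "unrank ?L (map (rank ?L) (drop k w)) = drop k w"
      by (rule map_sorted_elems_rank[OF fL]) (use L in simp)
    ultimately show ?thesis by (simp add: cut_word_def)
  qed
  ultimately show ?thesis using V by (force simp: cut_data_def)
qed

lemma cut_word_bij: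
  assumes hp: "heap_forest ps"
  shows "bij_betw (cut_word ps) (cut_data ps) (S_F ps \<times> {0..length ps})"
  unfolding bij_betw_def
proof
  show "inj_on (cut_word ps) (cut_data ps)" by (rule cut_word_inj[OF hp])
  show "cut_word ps ` cut_data ps = S_F ps \<times> {0..length ps}"
  proof
    show "cut_word ps ` cut_data ps \<subseteq> S_F ps \<times> {0..length ps}"
    proof
      fix y assume "y \<in> cut_word ps ` cut_data ps"
      then obtain V u v where x: "(V, u, v) \<in> cut_data ps" "y = cut_word ps (V, u, v)" by auto
      have V: "V \<in> admissible_cuts ps" and u: "u \<in> S_F (restrict_parents ps (root_part ps V))" and v: "v \<in> S_F (restrict_parents ps (leaf_part ps V))"
        using x by (auto simp: cut_data_def)
      have "fst y \<in> S_F ps" using cut_word_in[OF hp V u v] x(2) by (simp add: cut_word_def)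
      moreover have "snd y \<le> length ps"
      proof -
        have "card (root_part ps V) \<le> card {0..<length ps}" by (rule card_mono) auto
        thus ?thesis using x(2) by (simp add: cut_word_def)
      qed
      ultimately show "y \<in> S_F ps \<times> {0..length ps}" by (cases y) auto
    qed
    show "S_F ps \<times> {0..length ps} \<subseteq> cut_word ps ` cut_data ps"
      using cut_word_surj[OF hp] by auto
  qed
qed

lemma cut_word_pieces:
  assumes x: "(V, u, v) \<in> cut_data ps"
  shows "(\<lambda>(w, k). (piece (take k w) l, piece (drop k w) l)) (cut_word ps (V, u, v)) =
    ((u, map (\<lambda>i. l ! i) (sorted_elems (root_part ps V))), (v, map (\<lambda>i. l ! i) (sorted_elems (leaf_part ps V))))"
proof -
  let ?R = "root_part ps V" and ?L = "leaf_part ps V"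
  have V: "V \<in> admissible_cuts ps" and u: "u \<in> S_F (restrict_parents ps ?R)"
    and v: "v \<in> S_F (restrict_parents ps ?L)" using x by (auto simp: cut_data_def)
  have fR: "finite ?R" and fL: "finite ?L" using leaf_part_sub[OF V] finite_subset by auto
  have uP: "u \<in> perm_words (card ?R)" by (rule S_F_restrict_perm_words[OF fR u])
  have vP: "v \<in> perm_words (card ?L)" by (rule S_F_restrict_perm_words[OF fL v])
  have "length (unrank ?R u) = card ?R" using perm_words_length[OF uP] by simp
  thus ?thesis using piece_unrank[OF fR uP] piece_unrank[OF fL vP] by (simp add: cut_word_def)
qed

lemma theta_basis_roo_lea:
  "theta_basis (roo (ps, l) V) (fst c) * theta_basis (lea (ps, l) V) (snd c) =
    (\<Sum>(u, v)\<in>S_F (restrict_parents ps (root_part ps V)) \<times> S_F (restrict_parents ps (leaf_part ps V)).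
      if ((u, map (\<lambda>i. l ! i) (sorted_elems (root_part ps V))), (v, map (\<lambda>i. l ! i) (sorted_elems (leaf_part ps V)))) = c
      then 1 else (0::'k::semiring_1))"
proof -
  let ?SR = "S_F (restrict_parents ps (root_part ps V))" and ?SL = "S_F (restrict_parents ps (leaf_part ps V))"
  let ?lR = "map (\<lambda>i. l ! i) (sorted_elems (root_part ps V))" and ?lL = "map (\<lambda>i. l ! i) (sorted_elems (leaf_part ps V))"
  have "theta_basis (roo (ps, l) V) (fst c) * theta_basis (lea (ps, l) V) (snd c)
      = (\<Sum>u\<in>?SR. if (u, ?lR) = fst c then (1::'k) else 0) * (\<Sum>v\<in>?SL. if (v, ?lL) = snd c then (1::'k) else 0)"
    by (simp add: theta_basis_def roo_def lea_def sub_forest_eq)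
  also have "\<dots> = (\<Sum>u\<in>?SR. \<Sum>v\<in>?SL. (if (u, ?lR) = fst c then (1::'k) else 0) * (if (v, ?lL) = snd c then 1 else 0))"
    by (rule sum_product)
  also have "\<dots> = (\<Sum>(u, v)\<in>?SR \<times> ?SL. if ((u, ?lR), (v, ?lL)) = c then 1 else 0)"
    by (simp add: sum.cartesian_product) (intro sum.cong refl, cases c, auto)
  finally show ?thesis .
qed

lemma theta_basis_coprod:
  assumes hp: "heap_forest ps"
  shows "(\<Sum>w\<in>S_F ps. fq_coprod_basis (w, l) c) =
    (\<Sum>V\<in>admissible_cuts ps. theta_basis (roo (ps, l) V) (fst c) * (theta_basis (lea (ps, l) V) (snd c) :: 'k::comm_semiring_1))"
proof -
  let ?G = "\<lambda>(w, k). if (piece (take k w) l, piece (drop k w) l) = c then (1::'k) else 0"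
  let ?lR = "\<lambda>V. map (\<lambda>i. l ! i) (sorted_elems (root_part ps V))"
    and ?lL = "\<lambda>V. map (\<lambda>i. l ! i) (sorted_elems (leaf_part ps V))"
  let ?H = "\<lambda>(V, u, v). if ((u, ?lR V), (v, ?lL V)) = c then (1::'k) else 0"
  have "(\<Sum>w\<in>S_F ps. fq_coprod_basis (w, l) c) = (\<Sum>w\<in>S_F ps. \<Sum>k\<in>{0..length ps}. ?G (w, k))"
    by (intro sum.cong refl) (simp add: fq_coprod_basis_def S_F_length)
  also have "\<dots> = (\<Sum>y\<in>S_F ps \<times> {0..length ps}. ?G y)" by (simp add: sum.cartesian_product)
  also have "\<dots> = (\<Sum>x\<in>cut_data ps. ?G (cut_word ps x))"
    by (rule sum.reindex_bij_betw[symmetric, OF cut_word_bij[OF hp]])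
  also have "\<dots> = (\<Sum>x\<in>cut_data ps. ?H x)"
  proof (rule sum.cong[OF refl])
    fix x assume x: "x \<in> cut_data ps"
    obtain V u v where xe: "x = (V, u, v)" by (cases x) auto
    show "?G (cut_word ps x) = ?H x"
      using cut_word_pieces[of V u v ps l] x xe by (simp add: case_prod_unfold)
  qed
  also have "\<dots> = (\<Sum>V\<in>admissible_cuts ps. \<Sum>uv\<in>S_F (restrict_parents ps (root_part ps V)) \<times> S_F (restrict_parents ps (leaf_part ps V)). ?H (V, uv))"
    unfolding cut_data_def by (subst sum.Sigma) (auto simp: finite_cuts finite_S_F split_def)
  also have "\<dots> = (\<Sum>V\<in>admissible_cuts ps. theta_basis (roo (ps, l) V) (fst c) * theta_basis (lea (ps, l) V) (snd c))"
    by (intro sum.cong refl) (simp add: theta_basis_roo_lea case_prod_unfold)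
  finally show ?thesis .
qed

lemma Theta_coprod:
  assumes x: "x \<in> fvec (HF d)"
  shows "F_coprod (Theta x) = tensor_map Theta Theta (H_coprod x :: dforest \<times> dforest \<Rightarrow> 'k::comm_semiring_1)"
proof (rule ext)
  fix c
  have fx: "finite (supp x)" using x by (simp add: fvec_def)
  have hx: "\<And>a. a \<in> supp x \<Longrightarrow> heap_forest (fst a)" using x HF_heap_forest by (auto simp: fvec_def)
  let ?T = "\<lambda>(a, b) (c, e). Theta (bvec a :: dforest \<Rightarrow> 'k) c * Theta (bvec b :: dforest \<Rightarrow> 'k) e"
  have "F_coprod (Theta x) c = (\<Sum>a\<in>supp x. x a * lin_ext fq_coprod_basis (theta_basis a) c)"
    unfolding F_coprod_def Theta_as_lin by (rule lin_ext_comp) (auto simp: fx finite_supp_theta)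
  also have "\<dots> = (\<Sum>a\<in>supp x. x a * (\<Sum>w\<in>S_F (fst a). fq_coprod_basis (w, snd a) c))"
    by (simp add: lin_ext_theta)
  also have "\<dots> = (\<Sum>a\<in>supp x. x a * lin_ext ?T (H_coprod_basis a) c)"
  proof (rule sum.cong[OF refl])
    fix a assume a: "a \<in> supp x"
    have "lin_ext ?T (H_coprod_basis a) c = (\<Sum>V\<in>admissible_cuts (fst a). ?T (roo a V, lea a V) c)"
      unfolding H_coprod_basis_def by (rule lin_ext_ind[OF finite_cuts])
    also have "\<dots> = (\<Sum>V\<in>admissible_cuts (fst a). theta_basis (roo a V) (fst c) * theta_basis (lea a V) (snd c))"
      by (simp add: Theta_bvec case_prod_unfold)
    also have "\<dots> = (\<Sum>w\<in>S_F (fst a). fq_coprod_basis (w, snd a) c)"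
      using theta_basis_coprod[OF hx[OF a], of "snd a" c, where 'k='k] by simp
    finally show "x a * (\<Sum>w\<in>S_F (fst a). fq_coprod_basis (w, snd a) c) = x a * lin_ext ?T (H_coprod_basis a) c"
      by simp
  qed
  also have "\<dots> = lin_ext ?T (H_coprod x) c"
    unfolding H_coprod_def by (rule lin_ext_comp[symmetric]) (auto simp: fx H_coprod_basis_def finite_subset[OF supp_indicator_sum] finite_cuts)
  also have "\<dots> = tensor_map Theta Theta (H_coprod x) c" unfolding tensor_map_def ..
  finally show "F_coprod (Theta x) c = tensor_map Theta Theta (H_coprod x) c" .
qed

theorem mainTheorem11:
  fixes d :: nat
  assumes "d \<ge> 1"
  shows "bij_betw (Theta :: (dforest \<Rightarrow> 'k::field) \<Rightarrow> dperm \<Rightarrow> 'k) (fvec (HF d)) (fvec (DP d))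
    \<and> (\<forall>x\<in>fvec (HF d). \<forall>y\<in>fvec (HF d). \<forall>c::'k.
          Theta (\<lambda>F. c * x F + y F) = (\<lambda>p. c * Theta x p + Theta y p))
    \<and> Theta (H_unit :: dforest \<Rightarrow> 'k) = F_unit
    \<and> (\<forall>x\<in>fvec (HF d). \<forall>y\<in>fvec (HF d).
          Theta (H_mult x y :: dforest \<Rightarrow> 'k) = F_mult (Theta x) (Theta y))
    \<and> (\<forall>x\<in>fvec (HF d).
          F_coprod (Theta x) = tensor_map Theta Theta (H_coprod x :: dforest \<times> dforest \<Rightarrow> 'k))
    \<and> (\<forall>x\<in>fvec (HF d). F_counit (Theta x) = (H_counit x :: 'k))
    \<and> (\<forall>n. \<forall>x\<in>fvec (HF d). supp (x :: dforest \<Rightarrow> 'k) \<subseteq> {F. hdeg F = n}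
          \<longrightarrow> supp (Theta x) \<subseteq> {p. pdeg p = n})"
proof -
  have fin: "finite (supp x)" if "x \<in> fvec B" for x :: "'b \<Rightarrow> 'k" and B
    using that by (simp add: fvec_def)
  show ?thesis
    using Theta_bij Theta_linear[OF fin fin] Theta_unit Theta_mult Theta_coprod
      Theta_counit[OF fin] Theta_grading
    by blast
qed

end
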